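(* Let $n\ge2$, $\alpha,\beta>0$, $\alpha^2+\beta^2=1$, $r=\alpha/\beta\in(0,1)$, $\boldsymbol\gamma=(\gamma_1,\dots,\gamma_n)\in[0,1)^n$, and $\rho_{\boldsymbol\gamma}=\bigl(\bigotimes_{i=1}^n\mathcal E_{\gamma_i}\bigr)(|\psi_n\rangle\langle\psi_n|)$ with $|\psi_n\rangle=\alpha|0^n\rangle+\beta|1^n\rangle$. Then the entries $p_{\mathbf0}=\langle0^n|\rho_{\boldsymbol\gamma}|0^n\rangle$, $p_{\mathbf1}=\langle1^n|\rho_{\boldsymbol\gamma}|1^n\rangle$, $c=\langle0^n|\rho_{\boldsymbol\gamma}|1^n\rangle$ are $$p_{\mathbf0}=\alpha^2+\beta^2\prod_i\gamma_i,\quad p_{\mathbf1}=\beta^2\prod_i(1-\gamma_i),\quad c=\alpha\beta\sqrt{\textstyle\prod_i(1-\gamma_i)},$$ and $\rho_{\boldsymbol\gamma}\in\mathcal S$ iff $p_{\mathbf0}\ge c$ and $p_{\mathbf1}\ge c$. The facet equation $p_{\mathbf1}=c$ holds iff $\prod_i(1-\gamma_i)=r^2$, and on this set $p_{\mathbf0}\ge c$ holds automatically. For every bipartition $A|B$ into nonempty parts, the $2\times2$ block of $\rho_{\boldsymbol\gamma}^{T_A}$ on $\mathrm{span}\{|1^A0^B\rangle,|0^A1^B\rangle\}$ has determinant $\beta^2\prod_i(1-\gamma_i)\bigl(\beta^2\prod_i\gamma_i-\alpha^2\bigr)$, independent of the cut, so the negativity across every bipartition vanishes if and only if $\prod_i\gamma_i\ge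 r^2$, with the death surface $\prod_i\gamma_i=r^2$. The involution $\gamma_i\mapsto1-\gamma_i$ exchanges the surfaces $\prod_i\gamma_i=r^2$ and $\prod_i(1-\gamma_i)=r^2$; equivalently, with $\bar\gamma_e=(\prod_i\gamma_i)^{1/n}$ and $\bar\gamma_+=1-(\prod_i(1-\gamma_i))^{1/n}$, the death surface is $\bar\gamma_e=r^{2/n}$ and the rebirth surface is $\bar\gamma_+=1-r^{2/n}$, and these values sum to one.
   Context: $\mathcal E_{\gamma_i}$ is single-qubit amplitude damping with Kraus operators $|0\rangle\langle0|+\sqrt{1-\gamma_i}|1\rangle\langle1|$ and $\sqrt{\gamma_i}|0\rangle\langle1|$, applied to qubit $i$. $\mathcal S$ is the $n$-qubit stabilizer polytope (convex hull of pure stabilizer states $C|0^n\rangle$, $C$ Clifford). $T_A$ is partial transposition on subsystem $A$; negativity is $(\|\rho^{T_A}\|_1-1)/2$. *)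

theory Defs
  imports Complex_Main
begin

text \<open>Computational basis states are labelled by subsets x of {..<n}
  (x = set of qubits in state 1). Operators are matrices indexed by such labels; only
  entries with both labels in basis n are meaningful.\<close>

type_synonym qmat = "nat set \<Rightarrow> nat set \<Rightarrow> complex"
type_synonym qvec = "nat set \<Rightarrow> complex"
type_synonym qubit_op = "bool \<Rightarrow> bool \<Rightarrow> complex"

definition basis :: "nat \<Rightarrow> nat set set" where
  "basis n = Pow {..<n}"

definition meq :: "nat \<Rightarrow> qmat \<Rightarrow> qmat \<Rightarrow> bool" where
  "meq n A B \<longleftrightarrow> (\<forall>x\<in>basis n. \<forall>y\<in>basis n. A x y = B x y)"

definition mmult :: "nat \<Rightarrow> qmat \<Rightarrow> qmat \<Rightarrow> qmat" where
  "mmult n A B = (\<lambda>x y. \<Sum>z\<in>basis n. A x z * B z y)"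

definition mulvec :: "nat \<Rightarrow> qmat \<Rightarrow> qvec \<Rightarrow> qvec" where
  "mulvec n A v = (\<lambda>x. \<Sum>y\<in>basis n. A x y * v y)"

definition adj :: "qmat \<Rightarrow> qmat" where
  "adj A = (\<lambda>x y. cnj (A y x))"

definition ident :: qmat where
  "ident = (\<lambda>x y. if x = y then 1 else 0)"

definition mtrace :: "nat \<Rightarrow> qmat \<Rightarrow> complex" where
  "mtrace n A = (\<Sum>x\<in>basis n. A x x)"

definition proj :: "qvec \<Rightarrow> qmat" where
  "proj v = (\<lambda>x y. v x * cnj (v y))"

definition tensor :: "nat \<Rightarrow> (nat \<Rightarrow> qubit_op) \<Rightarrow> qmat" where
  "tensor n M = (\<lambda>x y. \<Prod>i<n. M i (i \<in> x) (i \<in> y))"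

text \<open>Amplitude damping Kraus operators:
  K0 = |0><0| + sqrt(1-g)|1><1|,  K1 = sqrt g |0><1|  (True = |1>).\<close>
definition ad_K0 :: "real \<Rightarrow> qubit_op" where
  "ad_K0 g = (\<lambda>a b. if a = b then (if a then complex_of_real (sqrt (1 - g)) else 1) else 0)"

definition ad_K1 :: "real \<Rightarrow> qubit_op" where
  "ad_K1 g = (\<lambda>a b. if \<not> a \<and> b then complex_of_real (sqrt g) else 0)"

definition ad_kraus :: "real \<Rightarrow> bool \<Rightarrow> qubit_op" where
  "ad_kraus g k = (if k then ad_K1 g else ad_K0 g)"

text \<open>The product channel (E_{g 0} \<otimes> ... \<otimes> E_{g (n-1)}), whose Kraus operators are the
  tensor products of the single-qubit Kraus operators; k \<subseteq> {..<n} selects K1 on qubits in k.\<close>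
definition damp :: "nat \<Rightarrow> (nat \<Rightarrow> real) \<Rightarrow> qmat \<Rightarrow> qmat" where
  "damp n g \<rho> = (\<lambda>x y. \<Sum>k\<in>basis n.
      mmult n (mmult n (tensor n (\<lambda>i. ad_kraus (g i) (i \<in> k))) \<rho>)
              (adj (tensor n (\<lambda>i. ad_kraus (g i) (i \<in> k)))) x y)"

definition psi :: "nat \<Rightarrow> real \<Rightarrow> real \<Rightarrow> qvec" where
  "psi n a b = (\<lambda>x. if x = {} then complex_of_real a
                    else if x = {..<n} then complex_of_real b else 0)"

definition ket0 :: qvec where
  "ket0 = (\<lambda>x. if x = {} then 1 else 0)"

definition gate_H :: "nat \<Rightarrow> qmat" where
  "gate_H j = (\<lambda>x y. if x - {j} = y - {j}
      then (if j \<in> x \<and> j \<in> y then -1 else 1) / complex_of_real (sqrt 2) else 0)"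

definition gate_S :: "nat \<Rightarrow> qmat" where
  "gate_S j = (\<lambda>x y. if x = y then (if j \<in> x then \<i> else 1) else 0)"

definition toggle :: "nat \<Rightarrow> nat set \<Rightarrow> nat set" where
  "toggle k y = (if k \<in> y then y - {k} else insert k y)"

definition gate_CNOT :: "nat \<Rightarrow> nat \<Rightarrow> qmat" where
  "gate_CNOT j k = (\<lambda>x y. if x = (if j \<in> y then toggle k y else y) then 1 else 0)"

text \<open>The n-qubit Clifford group: generated by H, S, CNOT (global phases are irrelevant
  for the stabilizer states C|0^n>).\<close>
inductive_set clifford :: "nat \<Rightarrow> qmat set" for n :: nat where
  cl_id: "ident \<in> clifford n"
| cl_H: "C \<in> clifford n \<Longrightarrow> j < n \<Longrightarrow> mmult n (gate_H j) C \<in> clifford n"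
| cl_S: "C \<in> clifford n \<Longrightarrow> j < n \<Longrightarrow> mmult n (gate_S j) C \<in> clifford n"
| cl_CNOT: "C \<in> clifford n \<Longrightarrow> j < n \<Longrightarrow> k < n \<Longrightarrow> j \<noteq> k
            \<Longrightarrow> mmult n (gate_CNOT j k) C \<in> clifford n"

definition stab_states :: "nat \<Rightarrow> qvec set" where
  "stab_states n = {mulvec n C ket0 | C. C \<in> clifford n}"

definition stab_poly :: "nat \<Rightarrow> qmat set" where
  "stab_poly n = {\<rho>. \<exists>(I :: nat set) w s. finite I \<and> (\<forall>i\<in>I. w i \<ge> 0 \<and> s i \<in> stab_states n)
       \<and> (\<Sum>i\<in>I. w i) = 1
       \<and> meq n \<rho> (\<lambda>x y. \<Sum>i\<in>I. complex_of_real (w i) * proj (s i) x y)}"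

text \<open>Partial transposition on subsystem A:
  <a b| rho^{T_A} |a' b'> = <a' b| rho |a b'>.\<close>
definition ptrans :: "nat set \<Rightarrow> qmat \<Rightarrow> qmat" where
  "ptrans A \<rho> = (\<lambda>x y. \<rho> ((x - A) \<union> (y \<inter> A)) ((y - A) \<union> (x \<inter> A)))"

definition unitary :: "nat \<Rightarrow> qmat \<Rightarrow> bool" where
  "unitary n U \<longleftrightarrow> meq n (mmult n (adj U) U) ident"

text \<open>Trace norm via its variational form ||M||_1 = max over unitaries U of |tr(U M)|.\<close>
definition trace_norm :: "nat \<Rightarrow> qmat \<Rightarrow> real" where
  "trace_norm n M = Sup {cmod (mtrace n (mmult n U M)) | U. unitary n U}"

definition negativity :: "nat \<Rightarrow> nat set \<Rightarrow> qmat \<Rightarrow> real" where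
  "negativity n A \<rho> = (trace_norm n (ptrans A \<rho>) - 1) / 2"

end

(*
  Damping leaves the state diagonal in the computational basis except for the coherence
  c = alpha beta sqrt (prod (1 - gamma i)) between |0^n> and |1^n>; the population of |x> is a
  product of per-qubit branch probabilities.

  Every stabilizer state has all its Pauli expectation values either zero or
  of modulus one, since H, S and CNOT permute the Pauli operators up to phases.  Summing the
  expectations of X on all qubits times Z on b over all b isolates the product of the two corner
  amplitudes, so if both are nonzero some such Pauli has a unimodular expectation, and the equality
  case of Cauchy-Schwarz forces the two corner amplitudes to have equal moduli.  Hence the corner
  coherence of a stabilizer state, and of every mixture of them, is at most each corner population.
  Conversely, if both corner populations dominate c, the state is 2c |GHZ><GHZ| plus a nonnegative
  diagonal, i.e. a mixture of stabilizer states.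

  Each partial transpose is again diagonal except for the entries c at
  (1^A 0^B, 0^A 1^B) and its mirror.  Its trace norm is one iff c^2 <= d_A d_B: then it is a
  nonnegative diagonal plus a positive rank-one matrix, each of trace norm equal to its trace;
  otherwise a Householder reflection along a negative direction of the 2x2 block has trace
  larger than one.
*)
theory Submission
  imports Defs "HOL-Library.Nat_Bijection"
begin

lemma sum_Pow_prod:
  fixes f :: "nat \<Rightarrow> bool \<Rightarrow> 'a::comm_semiring_1"
  shows "(\<Sum>z\<in>Pow {..<n}. \<Prod>i<n. f i (i \<in> z)) = (\<Prod>i<n. f i False + f i True)"
proof (induction n)
  case 0
  then show ?case by simp
next
  case (Suc n)
  have Pow_Suc: "Pow {..<Suc n} = Pow {..<n} \<union> insert n ` Pow {..<n}"
    by (simp add: lessThan_Suc Pow_insert)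
  have inj: "inj_on (insert n) (Pow {..<n})"
    by (rule inj_onI) (metis Pow_iff insert_ident lessThan_iff order_less_irrefl subsetD)
  have without_n: "(\<Prod>i<Suc n. f i (i \<in> z)) = f n False * (\<Prod>i<n. f i (i \<in> z))"
    if "z \<in> Pow {..<n}" for z
  proof -
    have "n \<notin> z"
      using that by auto
    then show ?thesis
      by (simp add: lessThan_Suc)
  qed
  have with_n: "(\<Prod>i<Suc n. f i (i \<in> insert n z)) = f n True * (\<Prod>i<n. f i (i \<in> z))" for z
  proof -
    have "(\<Prod>i<n. f i (i \<in> insert n z)) = (\<Prod>i<n. f i (i \<in> z))"
      by (rule prod.cong) auto
    then show ?thesis
      by (simp add: lessThan_Suc)
  qed
  have "(\<Sum>z\<in>Pow {..<Suc n}. \<Prod>i<Suc n. f i (i \<in> z))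
      = (\<Sum>z\<in>Pow {..<n}. \<Prod>i<Suc n. f i (i \<in> z))
        + (\<Sum>z\<in>insert n ` Pow {..<n}. \<Prod>i<Suc n. f i (i \<in> z))"
    unfolding Pow_Suc by (rule sum.union_disjoint) auto
  also have "\<dots> = f n False * (\<Sum>z\<in>Pow {..<n}. \<Prod>i<n. f i (i \<in> z))
                    + f n True * (\<Sum>z\<in>Pow {..<n}. \<Prod>i<n. f i (i \<in> z))"
    by (simp only: sum.reindex[OF inj] o_def without_n with_n cong: sum.cong)
       (simp add: sum_distrib_left)
  also have "\<dots> = (f n False + f n True) * (\<Prod>i<n. f i False + f i True)"
    using Suc.IH by (simp add: distrib_right)
  also have "\<dots> = (\<Prod>i<Suc n. f i False + f i True)"
    by (simp only: prod.lessThan_Suc mult.commute)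
  finally show ?case .
qed

lemma finite_basis [simp]: "finite (basis n)"
  by (simp add: basis_def)

lemma prod_if_zero:
  assumes "finite S"
  shows "(\<Prod>i\<in>S. if P i then f i else (0::'a::comm_semiring_1))
           = (if \<forall>i\<in>S. P i then \<Prod>i\<in>S. f i else 0)"
proof (cases "\<forall>i\<in>S. P i")
  case True
  then show ?thesis
    by (auto intro: prod.cong)
next
  case False
  then show ?thesis
    using assms by (auto intro!: prod_zero)
qed

lemma empty_neq_lessThan: "(n::nat) \<ge> 1 \<Longrightarrow> {} \<noteq> {..<n}"
  by (metis lessThan_empty_iff not_one_le_zero)

lemma prod_sqrt: "(\<Prod>i\<in>S. sqrt (f i)) = sqrt (\<Prod>i\<in>S. f i)"
  by (induction S rule: infinite_finite_induct) (auto simp: real_sqrt_mult)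

lemma cnj_mult_self: "cnj z * z = complex_of_real ((cmod z)\<^sup>2)"
  using complex_norm_square[of z] by (simp add: mult.commute)

lemma sum_two:
  assumes "finite S" "A \<in> S" "B \<in> S" "A \<noteq> B" "\<forall>x\<in>S. x \<noteq> A \<and> x \<noteq> B \<longrightarrow> h x = 0"
  shows "sum h S = h A + h B"
proof -
  have "sum h S = sum h {A, B}"
    by (rule sum.mono_neutral_right) (use assms in auto)
  then show ?thesis
    using assms(4) by simp
qed

lemma mulvec_mmult: "mulvec n (mmult n A B) v = mulvec n A (mulvec n B v)"
proof
  fix x
  have "mulvec n (mmult n A B) v x = (\<Sum>y\<in>basis n. \<Sum>z\<in>basis n. A x z * B z y * v y)"
    unfolding mulvec_def mmult_def by (simp add: sum_distrib_right)
  also have "\<dots> = (\<Sum>z\<in>basis n. \<Sum>y\<in>basis n. A x z * B z y * v y)"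
    by (rule sum.swap)
  also have "\<dots> = mulvec n A (mulvec n B v) x"
    unfolding mulvec_def by (simp add: sum_distrib_left mult.assoc)
  finally show "mulvec n (mmult n A B) v x = mulvec n A (mulvec n B v) x" .
qed

lemma mmult_conj_proj: "mmult n (mmult n K (proj v)) (adj K) = proj (mulvec n K v)"
proof (intro ext)
  fix x y
  have "mmult n (mmult n K (proj v)) (adj K) x y
      = (\<Sum>w\<in>basis n. (\<Sum>z\<in>basis n. K x z * v z) * (cnj (v w) * cnj (K y w)))"
    unfolding mmult_def proj_def adj_def
    by (rule sum.cong[OF refl]) (simp add: sum_distrib_right mult.assoc)
  also have "\<dots> = proj (mulvec n K v) x y"
    unfolding mulvec_def proj_def by (simp add: sum_distrib_left mult.commute)
  finally show "mmult n (mmult n K (proj v)) (adj K) x y = proj (mulvec n K v) x y" .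
qed

lemma mulvec_ket0: "mulvec n G ket0 z = G z {}"
  by (simp add: mulvec_def ket0_def basis_def if_distrib cong: if_cong)

lemma mulvec_ident:
  assumes "x \<in> basis n"
  shows "mulvec n ident v x = v x"
proof -
  have "mulvec n ident v x = (\<Sum>y\<in>basis n. if y = x then v x else 0)"
    unfolding mulvec_def ident_def by (rule sum.cong) auto
  then show ?thesis
    using assms by simp
qed

definition expect :: "nat \<Rightarrow> qvec \<Rightarrow> qmat \<Rightarrow> complex" where
  "expect n v M = (\<Sum>x\<in>basis n. \<Sum>y\<in>basis n. cnj (v x) * M x y * v y)"

lemma expect_eq_inner: "expect n v M = (\<Sum>x\<in>basis n. cnj (v x) * mulvec n M v x)"
  by (simp add: expect_def mulvec_def sum_distrib_left mult.assoc)

lemma inner_mulvec_adj: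
  "(\<Sum>x\<in>basis n. cnj (mulvec n G w x) * u x) = (\<Sum>y\<in>basis n. cnj (w y) * mulvec n (adj G) u y)"
proof -
  have "(\<Sum>x\<in>basis n. cnj (mulvec n G w x) * u x)
      = (\<Sum>x\<in>basis n. \<Sum>y\<in>basis n. cnj (w y) * (cnj (G x y) * u x))"
    unfolding mulvec_def by (simp add: sum_distrib_left sum_distrib_right mult_ac)
  also have "\<dots> = (\<Sum>y\<in>basis n. \<Sum>x\<in>basis n. cnj (w y) * (cnj (G x y) * u x))"
    by (rule sum.swap)
  also have "\<dots> = (\<Sum>y\<in>basis n. cnj (w y) * mulvec n (adj G) u y)"
    unfolding mulvec_def adj_def by (simp add: sum_distrib_left)
  finally show ?thesis .
qed

lemma expect_mulvec: "expect n (mulvec n G v) M = expect n v (mmult n (mmult n (adj G) M) G)"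
  by (simp add: expect_eq_inner inner_mulvec_adj mulvec_mmult)

section \<open>The damped GHZ state\<close>

text \<open>Damping acts independently on the qubits of \<open>|1\<^sup>n\<rangle>\<close>: qubit \<open>i\<close> stays excited with
  amplitude \<open>sqrt (1 - g i)\<close> and decays with amplitude \<open>sqrt (g i)\<close>, so \<open>|x\<rangle>\<close> is reached with
  amplitude \<open>branch_amp n g x\<close>.\<close>

definition branch_prob :: "nat \<Rightarrow> (nat \<Rightarrow> real) \<Rightarrow> nat set \<Rightarrow> real" where
  "branch_prob n g x = (\<Prod>i<n. if i \<in> x then 1 - g i else g i)"

definition branch_amp :: "nat \<Rightarrow> (nat \<Rightarrow> real) \<Rightarrow> nat set \<Rightarrow> real" where
  "branch_amp n g x = (\<Prod>i<n. if i \<in> x then sqrt (1 - g i) else sqrt (g i))"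

definition damped_ghz :: "nat \<Rightarrow> real \<Rightarrow> real \<Rightarrow> (nat \<Rightarrow> real) \<Rightarrow> nat set \<Rightarrow> nat set \<Rightarrow> real" where
  "damped_ghz n a b g x y =
     (if x = y then b\<^sup>2 * branch_prob n g x + (if x = {} then a\<^sup>2 else 0) else 0)
     + (if (x = {} \<and> y = {..<n}) \<or> (x = {..<n} \<and> y = {}) then a * b * branch_amp n g {..<n} else 0)"

lemma branch_amp_sq:
  assumes "\<forall>i<n. 0 \<le> g i \<and> g i \<le> 1"
  shows "branch_amp n g x * branch_amp n g x = branch_prob n g x"
  unfolding branch_amp_def branch_prob_def prod.distrib[symmetric]
  by (rule prod.cong) (use assms in auto)

lemma branch_amp_full: "branch_amp n g {..<n} = sqrt (\<Prod>i<n. 1 - g i)"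
  unfolding branch_amp_def prod_sqrt[symmetric] by (rule prod.cong) auto

lemma branch_prob_empty: "branch_prob n g {} = (\<Prod>i<n. g i)"
  by (simp add: branch_prob_def)

lemma branch_prob_full: "branch_prob n g {..<n} = (\<Prod>i<n. 1 - g i)"
  unfolding branch_prob_def by (rule prod.cong) auto

lemma branch_amp_nonneg: "\<forall>i<n. 0 \<le> g i \<and> g i \<le> 1 \<Longrightarrow> branch_amp n g x \<ge> 0"
  unfolding branch_amp_def by (intro prod_nonneg) auto

lemma branch_prob_nonneg: "\<forall>i<n. 0 \<le> g i \<and> g i \<le> 1 \<Longrightarrow> branch_prob n g x \<ge> 0"
  unfolding branch_prob_def by (intro prod_nonneg) auto

lemma sum_branch_prob: "(\<Sum>x\<in>basis n. branch_prob n g x) = 1"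
proof -
  have "(\<Sum>x\<in>basis n. branch_prob n g x)
      = (\<Sum>x\<in>Pow {..<n}. \<Prod>i<n. (\<lambda>i c. if c then 1 - g i else g i) i (i \<in> x))"
    unfolding branch_prob_def basis_def by simp
  also have "\<dots> = 1"
    by (subst sum_Pow_prod) simp
  finally show ?thesis .
qed

lemma branch_prob_complement:
  assumes "A \<subseteq> {..<n}"
  shows "branch_prob n g A * branch_prob n g ({..<n} - A) = (\<Prod>i<n. g i) * (\<Prod>i<n. 1 - g i)"
  unfolding branch_prob_def prod.distrib[symmetric] by (rule prod.cong) (use assms in auto)

lemma damped_ghz_diag:
  assumes "n \<ge> 1"
  shows "damped_ghz n a b g x x = b\<^sup>2 * branch_prob n g x + (if x = {} then a\<^sup>2 else 0)"
  using empty_neq_lessThan[OF assms] by (auto simp: damped_ghz_def)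

lemma sum_damped_ghz_diag:
  assumes "n \<ge> 1" "a\<^sup>2 + b\<^sup>2 = 1"
  shows "(\<Sum>x\<in>basis n. damped_ghz n a b g x x) = 1"
proof -
  have "{} \<in> basis n"
    by (simp add: basis_def)
  then show ?thesis
    using assms by (simp add: damped_ghz_diag sum.distrib sum_distrib_left[symmetric] sum_branch_prob)
qed

lemma mulvec_psi:
  assumes "n \<ge> 1"
  shows "mulvec n M (psi n a b) x = M x {} * a + M x {..<n} * b"
proof -
  have ne: "{} \<noteq> {..<n}"
    using assms by (rule empty_neq_lessThan)
  have "mulvec n M (psi n a b) x
      = (\<Sum>z\<in>basis n. (if z = {} then M x z * a else 0) + (if z = {..<n} then M x z * b else 0))"
    unfolding mulvec_def psi_def by (rule sum.cong) (use ne in auto)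
  also have "\<dots> = M x {} * a + M x {..<n} * b"
    by (simp add: sum.distrib basis_def)
  finally show ?thesis .
qed

lemma ad_tensor_col_empty:
  assumes "x \<in> basis n" "k \<in> basis n"
  shows "tensor n (\<lambda>i. ad_kraus (g i) (i \<in> k)) x {} = (if k = {} \<and> x = {} then 1 else 0)"
proof -
  have "tensor n (\<lambda>i. ad_kraus (g i) (i \<in> k)) x {} = (\<Prod>i<n. if i \<notin> k \<and> i \<notin> x then 1 else 0)"
    unfolding tensor_def by (rule prod.cong) (auto simp: ad_kraus_def ad_K0_def ad_K1_def)
  also have "\<dots> = (if k = {} \<and> x = {} then 1 else 0)"
    using assms by (subst prod_if_zero) (auto simp: basis_def)
  finally show ?thesis .
qed

lemma ad_tensor_col_full:
  assumes "x \<in> basis n" "k \<in> basis n"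
  shows "tensor n (\<lambda>i. ad_kraus (g i) (i \<in> k)) x {..<n}
           = (if k = {..<n} - x then complex_of_real (branch_amp n g x) else 0)"
proof -
  have "tensor n (\<lambda>i. ad_kraus (g i) (i \<in> k)) x {..<n}
     = (\<Prod>i<n. if (i \<in> k \<longleftrightarrow> i \<notin> x)
                 then complex_of_real (if i \<in> x then sqrt (1 - g i) else sqrt (g i)) else 0)"
    unfolding tensor_def by (rule prod.cong) (auto simp: ad_kraus_def ad_K0_def ad_K1_def)
  also have "\<dots> = (if k = {..<n} - x then complex_of_real (branch_amp n g x) else 0)"
    using assms by (subst prod_if_zero) (auto simp: basis_def branch_amp_def)
  finally show ?thesis .
qed

lemma ad_tensor_psi:
  assumes "n \<ge> 1" "k \<in> basis n" "z \<in> basis n"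
  shows "mulvec n (tensor n (\<lambda>i. ad_kraus (g i) (i \<in> k))) (psi n a b) z
           = (if k = {} \<and> z = {} then complex_of_real a else 0)
             + (if k = {..<n} - z then complex_of_real (branch_amp n g z * b) else 0)"
  using empty_neq_lessThan[OF assms(1)]
  unfolding mulvec_psi[OF assms(1)] ad_tensor_col_empty[OF assms(3,2)] ad_tensor_col_full[OF assms(3,2)]
  by (cases "k = {..<n} - z"; cases "k = {} \<and> z = {}") auto

lemma damp_psi_entry:
  assumes n1: "n \<ge> 1" and g: "\<forall>i<n. 0 \<le> g i \<and> g i \<le> 1"
    and xy: "x \<in> basis n" "y \<in> basis n"
  shows "damp n g (proj (psi n a b)) x y = complex_of_real (damped_ghz n a b g x y)"
proof -
  define u where "u k z = (if k = {} \<and> z = {} then a else 0)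
     + (if k = {..<n} - z then branch_amp n g z * b else 0)" for k z
  define corner where "corner = (if x = {} \<and> y = {} then a * a else 0)
     + (if (x = {} \<and> y = {..<n}) \<or> (x = {..<n} \<and> y = {}) then a * b * branch_amp n g {..<n} else 0)"
  have ne: "{} \<noteq> {..<n}"
    using n1 by (rule empty_neq_lessThan)
  have "damp n g (proj (psi n a b)) x y = (\<Sum>k\<in>basis n. complex_of_real (u k x * u k y))"
    unfolding damp_def mmult_conj_proj
    using xy ne by (intro sum.cong) (auto simp: proj_def ad_tensor_psi[OF n1] u_def)
  also have "\<dots> = (\<Sum>k\<in>basis n. complex_of_real ((if k = {} then corner else 0)
        + (if k = {..<n} - x then (if x = y then b * b * branch_prob n g x else 0) else 0)))"
  proof (intro sum.cong refl arg_cong[where f = complex_of_real])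
    fix k
    have u_empty: "u {} z = (if z = {} then a else 0) + (if z = {..<n} then branch_amp n g {..<n} * b else 0)"
      if "z \<in> basis n" for z
      using that by (auto simp: u_def basis_def)
    have u_nonempty: "u k z = (if k = {..<n} - z then branch_amp n g z * b else 0)" if "k \<noteq> {}" for z
      using that by (simp add: u_def)
    have "({..<n} - x = {..<n} - y) = (x = y)"
      using xy by (auto simp: basis_def)
    then show "u k x * u k y = (if k = {} then corner else 0)
        + (if k = {..<n} - x then (if x = y then b * b * branch_prob n g x else 0) else 0)"
      using ne xy unfolding corner_def branch_amp_sq[OF g, symmetric]
      by (cases "k = {}") (auto simp: u_empty u_nonempty basis_def)
  qed
  also have "\<dots> = complex_of_real (corner + (if x = y then b * b * branch_prob n g x else 0))"
    by (simp add: sum.distrib basis_def flip: of_real_sum)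
  also have "corner + (if x = y then b * b * branch_prob n g x else 0) = damped_ghz n a b g x y"
    unfolding corner_def damped_ghz_def using ne
    by (cases "x = y"; cases "x = {}") (auto simp: power2_eq_square)
  finally show ?thesis .
qed

lemma damp_psi_corners:
  assumes n1: "n \<ge> 1" and g: "\<forall>i<n. 0 \<le> g i \<and> g i \<le> 1"
  shows "damp n g (proj (psi n a b)) {} {} = complex_of_real (a\<^sup>2 + b\<^sup>2 * (\<Prod>i<n. g i))"
    and "damp n g (proj (psi n a b)) {..<n} {..<n} = complex_of_real (b\<^sup>2 * (\<Prod>i<n. 1 - g i))"
    and "damp n g (proj (psi n a b)) {} {..<n} = complex_of_real (a * b * sqrt (\<Prod>i<n. 1 - g i))"
proof -
  have corners: "{} \<in> basis n" "{..<n} \<in> basis n"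
    by (auto simp: basis_def)
  note entry = damp_psi_entry[OF n1 g] and ne = empty_neq_lessThan[OF n1]
  show "damp n g (proj (psi n a b)) {} {} = complex_of_real (a\<^sup>2 + b\<^sup>2 * (\<Prod>i<n. g i))"
    using ne by (simp add: entry corners damped_ghz_def branch_prob_empty)
  show "damp n g (proj (psi n a b)) {..<n} {..<n} = complex_of_real (b\<^sup>2 * (\<Prod>i<n. 1 - g i))"
    using ne by (simp add: entry corners damped_ghz_def branch_prob_full)
  show "damp n g (proj (psi n a b)) {} {..<n} = complex_of_real (a * b * sqrt (\<Prod>i<n. 1 - g i))"
    using ne by (simp add: entry corners damped_ghz_def branch_amp_full)
qed

section \<open>Pauli expectation values of stabilizer states\<close>

lemma expect_cong:
  assumes "\<forall>x\<in>basis n. v x = w x" "meq n M N"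
  shows "expect n v M = expect n w N"
  unfolding expect_def using assms by (intro sum.cong) (auto simp: meq_def)

lemma expect_scale: "expect n v (\<lambda>x y. c * M x y) = c * expect n v M"
  unfolding expect_def by (simp add: sum_distrib_left mult_ac)

lemma mulvec_meq: "meq n G T \<Longrightarrow> x \<in> basis n \<Longrightarrow> mulvec n G v x = mulvec n T v x"
  unfolding meq_def mulvec_def by (auto intro!: sum.cong)

lemma mmult_meq: "meq n G1 T1 \<Longrightarrow> meq n G2 T2 \<Longrightarrow> meq n (mmult n G1 G2) (mmult n T1 T2)"
  unfolding meq_def mmult_def by (auto intro!: sum.cong)

lemma mulvec_ident_ket0: "mulvec n ident ket0 = ket0"
proof
  fix z
  show "mulvec n ident ket0 z = ket0 z"
    unfolding mulvec_ket0 by (simp add: ident_def ket0_def)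
qed

definition qmult :: "qubit_op \<Rightarrow> qubit_op \<Rightarrow> qubit_op" where
  "qmult A B = (\<lambda>u w. A u False * B False w + A u True * B True w)"

definition qadj :: "qubit_op \<Rightarrow> qubit_op" where
  "qadj A = (\<lambda>u w. cnj (A w u))"

definition qconj :: "qubit_op \<Rightarrow> qubit_op \<Rightarrow> qubit_op" where
  "qconj G P = qmult (qmult (qadj G) P) G"

definition qid :: qubit_op where
  "qid = (\<lambda>u w. if u = w then 1 else 0)"

text \<open>\<open>qpauli x z\<close> is \<open>X\<^sup>x Z\<^sup>z\<close>; \<open>pauli n a b\<close> applies \<open>X\<close> on \<open>a\<close> and \<open>Z\<close> on \<open>b\<close>.\<close>

definition qpauli :: "bool \<Rightarrow> bool \<Rightarrow> qubit_op" where
  "qpauli x z = (\<lambda>u w. if u = (w \<noteq> x) then (if z \<and> w then -1 else 1) else 0)"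

definition qH :: qubit_op where
  "qH = (\<lambda>u w. (if u \<and> w then -1 else 1) / complex_of_real (sqrt 2))"

definition qS :: qubit_op where
  "qS = (\<lambda>u w. if u = w then (if u then \<i> else 1) else 0)"

definition pauli :: "nat \<Rightarrow> nat set \<Rightarrow> nat set \<Rightarrow> qmat" where
  "pauli n a b = tensor n (\<lambda>i. qpauli (i \<in> a) (i \<in> b))"

definition pauli_expect :: "nat \<Rightarrow> qvec \<Rightarrow> nat set \<Rightarrow> nat set \<Rightarrow> complex" where
  "pauli_expect n v a b = expect n v (pauli n a b)"

definition pauli_dichotomy :: "nat \<Rightarrow> qvec \<Rightarrow> bool" where
  "pauli_dichotomy n v \<longleftrightarrow> pauli_expect n v {} {} = 1
     \<and> (\<forall>a b. pauli_expect n v a b = 0 \<or> cmod (pauli_expect n v a b) = 1)"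

lemma mmult_tensor: "mmult n (tensor n A) (tensor n B) = tensor n (\<lambda>i. qmult (A i) (B i))"
proof (intro ext)
  fix x y
  have "mmult n (tensor n A) (tensor n B) x y
      = (\<Sum>z\<in>Pow {..<n}. \<Prod>i<n. A i (i \<in> x) (i \<in> z) * B i (i \<in> z) (i \<in> y))"
    unfolding mmult_def tensor_def basis_def by (simp add: prod.distrib)
  also have "\<dots> = tensor n (\<lambda>i. qmult (A i) (B i)) x y"
    by (subst sum_Pow_prod[where f = "\<lambda>i c. A i (i \<in> x) c * B i c (i \<in> y)"])
       (simp add: tensor_def qmult_def)
  finally show "mmult n (tensor n A) (tensor n B) x y = tensor n (\<lambda>i. qmult (A i) (B i)) x y" .
qed

lemma adj_tensor: "adj (tensor n A) = tensor n (\<lambda>i. qadj (A i))"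
  unfolding adj_def tensor_def qadj_def by simp

lemma conj_tensor:
  "mmult n (mmult n (adj (tensor n G)) (tensor n P)) (tensor n G) = tensor n (\<lambda>i. qconj (G i) (P i))"
  by (simp add: adj_tensor mmult_tensor qconj_def)

lemma tensor_scale_at:
  assumes "j < n"
  shows "tensor n (\<lambda>i. if i = j then (\<lambda>u w. c * F i u w) else F i) = (\<lambda>x y. c * tensor n F x y)"
proof (intro ext)
  fix x y
  have "(\<Prod>i\<in>{..<n}-{j}. (if i = j then (\<lambda>u w. c * F i u w) else F i) (i \<in> x) (i \<in> y))
      = (\<Prod>i\<in>{..<n}-{j}. F i (i \<in> x) (i \<in> y))"
    by (rule prod.cong) auto
  then show "tensor n (\<lambda>i. if i = j then (\<lambda>u w. c * F i u w) else F i) x y = c * tensor n F x y"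
    using assms unfolding tensor_def by (simp add: prod.remove[of "{..<n}" j])
qed

lemma tensor_local:
  assumes "j < n" "x \<in> basis n" "y \<in> basis n"
  shows "tensor n (\<lambda>i. if i = j then g else qid) x y
           = g (j \<in> x) (j \<in> y) * (if x - {j} = y - {j} then 1 else 0)"
proof -
  have "(\<Prod>i\<in>{..<n}-{j}. (if i = j then g else qid) (i \<in> x) (i \<in> y))
      = (\<Prod>i\<in>{..<n}-{j}. if (i \<in> x \<longleftrightarrow> i \<in> y) then 1 else 0)"
    by (rule prod.cong) (auto simp: qid_def)
  also have "\<dots> = (if x - {j} = y - {j} then 1 else 0)"
    using assms(2,3) by (subst prod_if_zero) (auto simp: basis_def)
  finally show ?thesis
    using assms(1) unfolding tensor_def by (simp add: prod.remove[of "{..<n}" j])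
qed

lemma meq_gate_H: "j < n \<Longrightarrow> meq n (gate_H j) (tensor n (\<lambda>i. if i = j then qH else qid))"
  unfolding meq_def by (simp add: tensor_local gate_H_def qH_def)

lemma meq_gate_S: "j < n \<Longrightarrow> meq n (gate_S j) (tensor n (\<lambda>i. if i = j then qS else qid))"
  unfolding meq_def by (auto simp: tensor_local gate_S_def qS_def)

lemma of_real_sqrt2_sq: "complex_of_real (sqrt 2) * complex_of_real (sqrt 2) = 2"
  by (simp flip: of_real_mult)

lemma qconj_qid: "qconj qid P = P"
  by (intro ext) (simp add: qconj_def qmult_def qadj_def qid_def)

lemma qconj_qH: "qconj qH (qpauli x z) = (\<lambda>u w. (if x \<and> z then -1 else 1) * qpauli z x u w)"
proof (intro ext)
  fix u w
  show "qconj qH (qpauli x z) u w = (if x \<and> z then -1 else 1) * qpauli z x u w"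
    by (cases x; cases z; cases u; cases w)
       (simp_all add: qconj_def qmult_def qadj_def qH_def qpauli_def field_simps of_real_sqrt2_sq)
qed

lemma qconj_qS: "qconj qS (qpauli x z) = (\<lambda>u w. (if x then -\<i> else 1) * qpauli x (z \<noteq> x) u w)"
proof (intro ext)
  fix u w
  show "qconj qS (qpauli x z) u w = (if x then -\<i> else 1) * qpauli x (z \<noteq> x) u w"
    by (cases x; cases z; cases u; cases w) (simp_all add: qconj_def qmult_def qadj_def qS_def qpauli_def)
qed

lemma qconj_qpauli_identity: "qconj (qpauli x z) (qpauli False False) = qpauli False False"
proof (intro ext)
  fix u w
  show "qconj (qpauli x z) (qpauli False False) u w = qpauli False False u w"
    by (cases x; cases z; cases u; cases w) (simp_all add: qconj_def qmult_def qadj_def qpauli_def)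
qed

lemma conj_local_pauli:
  assumes "j < n"
    and "qconj g (qpauli (j \<in> a) (j \<in> b)) = (\<lambda>u w. c * qpauli x z u w)"
  shows "mmult n (mmult n (adj (tensor n (\<lambda>i. if i = j then g else qid))) (pauli n a b))
              (tensor n (\<lambda>i. if i = j then g else qid))
         = (\<lambda>u w. c * pauli n (if x then insert j a else a - {j}) (if z then insert j b else b - {j}) u w)"
proof -
  let ?a = "if x then insert j a else a - {j}" and ?b = "if z then insert j b else b - {j}"
  have "mmult n (mmult n (adj (tensor n (\<lambda>i. if i = j then g else qid))) (pauli n a b))
              (tensor n (\<lambda>i. if i = j then g else qid))
      = tensor n (\<lambda>i. if i = j then (\<lambda>u w. c * qpauli (i \<in> ?a) (i \<in> ?b) u w)
                       else qpauli (i \<in> ?a) (i \<in> ?b))"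
    unfolding pauli_def conj_tensor
    by (rule arg_cong[where f = "tensor n"]) (use assms(2) in \<open>auto simp: qconj_qid\<close>)
  then show ?thesis
    unfolding tensor_scale_at[OF assms(1)] pauli_def by simp
qed

lemma pauli_dichotomy_step:
  assumes "pauli_dichotomy n v"
    and "\<And>a b. \<exists>a' b' c. cmod c = 1 \<and> pauli_expect n w a b = c * pauli_expect n v a' b'"
    and "pauli_expect n w {} {} = pauli_expect n v {} {}"
  shows "pauli_dichotomy n w"
  unfolding pauli_dichotomy_def
proof (intro conjI allI)
  show "pauli_expect n w {} {} = 1"
    using assms(1,3) by (simp add: pauli_dichotomy_def)
next
  fix a b
  obtain a' b' c where "cmod c = 1" "pauli_expect n w a b = c * pauli_expect n v a' b'"
    using assms(2) by blast
  moreover have "pauli_expect n v a' b' = 0 \<or> cmod (pauli_expect n v a' b') = 1"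
    using assms(1) by (simp add: pauli_dichotomy_def)
  ultimately show "pauli_expect n w a b = 0 \<or> cmod (pauli_expect n w a b) = 1"
    by (auto simp: norm_mult)
qed

lemma pauli_dichotomy_local_gate:
  assumes v: "pauli_dichotomy n v" and j: "j < n"
    and G: "meq n G (tensor n (\<lambda>i. if i = j then g else qid))"
    and g_perm: "\<And>x z. \<exists>c x' z'. cmod c = 1 \<and> qconj g (qpauli x z) = (\<lambda>u w. c * qpauli x' z' u w)"
    and g_unit: "qconj g (qpauli False False) = qpauli False False"
  shows "pauli_dichotomy n (mulvec n G v)"
proof -
  let ?T = "tensor n (\<lambda>i. if i = j then g else qid)"
  have conj: "pauli_expect n (mulvec n G v) a b = expect n v (mmult n (mmult n (adj ?T) (pauli n a b)) ?T)"
    for a b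
  proof -
    have "pauli_expect n (mulvec n G v) a b = pauli_expect n (mulvec n ?T v) a b"
      unfolding pauli_expect_def using G
      by (intro expect_cong) (auto simp: mulvec_meq meq_def)
    then show ?thesis
      by (simp add: pauli_expect_def expect_mulvec)
  qed
  show ?thesis
  proof (rule pauli_dichotomy_step[OF v])
    fix a b
    obtain c x' z' where c: "cmod c = 1"
      and g_ab: "qconj g (qpauli (j \<in> a) (j \<in> b)) = (\<lambda>u w. c * qpauli x' z' u w)"
      using g_perm by blast
    have "pauli_expect n (mulvec n G v) a b
        = c * pauli_expect n v (if x' then insert j a else a - {j}) (if z' then insert j b else b - {j})"
      unfolding conj conj_local_pauli[OF j g_ab] expect_scale by (simp add: pauli_expect_def)
    then show "\<exists>a' b' c. cmod c = 1 \<and> pauli_expect n (mulvec n G v) a b = c * pauli_expect n v a' b'"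
      using c by blast
  next
    have g_empty: "qconj g (qpauli (j \<in> {}) (j \<in> {})) = (\<lambda>u w. 1 * qpauli False False u w)"
      using g_unit by simp
    show "pauli_expect n (mulvec n G v) {} {} = pauli_expect n v {} {}"
      unfolding conj conj_local_pauli[OF j g_empty] expect_scale by (simp add: pauli_expect_def)
  qed
qed

lemma pauli_dichotomy_H: "pauli_dichotomy n v \<Longrightarrow> j < n \<Longrightarrow> pauli_dichotomy n (mulvec n (gate_H j) v)"
proof (rule pauli_dichotomy_local_gate[where g = qH and j = j])
  fix x z
  show "\<exists>c x' z'. cmod c = 1 \<and> qconj qH (qpauli x z) = (\<lambda>u w. c * qpauli x' z' u w)"
    by (rule exI[of _ "if x \<and> z then -1 else 1"], rule exI[of _ z], rule exI[of _ x]) (simp add: qconj_qH)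
qed (simp_all add: meq_gate_H qconj_qH)

lemma pauli_dichotomy_S: "pauli_dichotomy n v \<Longrightarrow> j < n \<Longrightarrow> pauli_dichotomy n (mulvec n (gate_S j) v)"
proof (rule pauli_dichotomy_local_gate[where g = qS and j = j])
  fix x z
  show "\<exists>c x' z'. cmod c = 1 \<and> qconj qS (qpauli x z) = (\<lambda>u w. c * qpauli x' z' u w)"
    by (rule exI[of _ "if x then -\<i> else 1"], rule exI[of _ x], rule exI[of _ "z \<noteq> x"]) (simp add: qconj_qS)
qed (simp_all add: meq_gate_S qconj_qS)

definition cnot_perm :: "nat \<Rightarrow> nat \<Rightarrow> nat set \<Rightarrow> nat set" where
  "cnot_perm j k y = (if j \<in> y then toggle k y else y)"

lemma mem_cnot_perm:
  "j \<noteq> k \<Longrightarrow> i \<in> cnot_perm j k y \<longleftrightarrow> (if i = k then (k \<in> y) \<noteq> (j \<in> y) else i \<in> y)"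
  unfolding cnot_perm_def toggle_def by auto

lemma cnot_perm_involution: "j \<noteq> k \<Longrightarrow> cnot_perm j k (cnot_perm j k y) = y"
  by (rule set_eqI) (cases "k \<in> y"; cases "j \<in> y"; simp add: mem_cnot_perm)

lemma cnot_perm_basis: "k < n \<Longrightarrow> y \<in> basis n \<Longrightarrow> cnot_perm j k y \<in> basis n"
  unfolding cnot_perm_def toggle_def basis_def by auto

lemma bij_betw_cnot_perm: "j \<noteq> k \<Longrightarrow> k < n \<Longrightarrow> bij_betw (cnot_perm j k) (basis n) (basis n)"
  by (rule bij_betw_byWitness[where f' = "cnot_perm j k"]) (auto simp: cnot_perm_involution cnot_perm_basis)

lemma sum_cnot_perm:
  assumes "j \<noteq> k" "k < n"
  shows "(\<Sum>y\<in>basis n. g (cnot_perm j k y)) = (\<Sum>y\<in>basis n. g y)"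
  by (rule sum.reindex_bij_betw[OF bij_betw_cnot_perm[OF assms]])

lemma mulvec_gate_CNOT:
  assumes "j \<noteq> k" "k < n" "x \<in> basis n"
  shows "mulvec n (gate_CNOT j k) v x = v (cnot_perm j k x)"
proof -
  have "mulvec n (gate_CNOT j k) v x = (\<Sum>y\<in>basis n. if y = cnot_perm j k x then v y else 0)"
    unfolding mulvec_def
  proof (rule sum.cong[OF refl])
    fix y
    have "x = cnot_perm j k y \<longleftrightarrow> y = cnot_perm j k x"
      using cnot_perm_involution[OF assms(1)] by auto
    then show "gate_CNOT j k x y * v y = (if y = cnot_perm j k x then v y else 0)"
      by (simp add: gate_CNOT_def cnot_perm_def)
  qed
  then show ?thesis
    using cnot_perm_basis[OF assms(2,3)] by simp
qed

lemma prod_remove_two: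
  fixes j k n :: nat
  assumes "j < n" "k < n" "j \<noteq> k"
  shows "(\<Prod>i<n. F i) = F j * F k * (\<Prod>i\<in>{..<n}-{j}-{k}. (F i :: complex))"
  using assms by (simp add: prod.remove[of "{..<n}" j] prod.remove[of "{..<n}-{j}" k] mult.assoc)

text \<open>Conjugation by CNOT propagates \<open>X\<close> from control to target and \<open>Z\<close> from target to control.\<close>

lemma pauli_cnot_perm:
  assumes jk: "j \<noteq> k" "j < n" "k < n"
  shows "pauli n a b (cnot_perm j k x) (cnot_perm j k y) = pauli n (cnot_perm j k a) (cnot_perm k j b) x y"
proof -
  have rest: "(\<Prod>i\<in>{..<n}-{j}-{k}. qpauli (i \<in> a) (i \<in> b) (i \<in> cnot_perm j k x) (i \<in> cnot_perm j k y))
     = (\<Prod>i\<in>{..<n}-{j}-{k}. qpauli (i \<in> cnot_perm j k a) (i \<in> cnot_perm k j b) (i \<in> x) (i \<in> y))"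
    by (rule prod.cong) (use jk in \<open>auto simp: mem_cnot_perm\<close>)
  have "qpauli (j \<in> a) (j \<in> b) (j \<in> cnot_perm j k x) (j \<in> cnot_perm j k y)
        * qpauli (k \<in> a) (k \<in> b) (k \<in> cnot_perm j k x) (k \<in> cnot_perm j k y)
      = qpauli (j \<in> cnot_perm j k a) (j \<in> cnot_perm k j b) (j \<in> x) (j \<in> y)
        * qpauli (k \<in> cnot_perm j k a) (k \<in> cnot_perm k j b) (k \<in> x) (k \<in> y)"
    using jk by (simp add: mem_cnot_perm)
      (cases "j \<in> a"; cases "j \<in> b"; cases "k \<in> a"; cases "k \<in> b";
       cases "j \<in> x"; cases "j \<in> y"; cases "k \<in> x"; cases "k \<in> y"; simp add: qpauli_def)
  then show ?thesis
    unfolding pauli_def tensor_def prod_remove_two[OF jk(2,3,1)] rest by simp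
qed

lemma pauli_dichotomy_CNOT:
  assumes v: "pauli_dichotomy n v" and jk: "j < n" "k < n" "j \<noteq> k"
  shows "pauli_dichotomy n (mulvec n (gate_CNOT j k) v)"
proof (rule pauli_dichotomy_step[OF v])
  let ?p = "cnot_perm j k"
  have perm: "pauli_expect n (mulvec n (gate_CNOT j k) v) a b = pauli_expect n v (?p a) (cnot_perm k j b)"
    for a b
  proof -
    have "pauli_expect n (mulvec n (gate_CNOT j k) v) a b
        = (\<Sum>x\<in>basis n. \<Sum>y\<in>basis n. cnj (v (?p x)) * pauli n a b (?p (?p x)) (?p (?p y)) * v (?p y))"
      unfolding pauli_expect_def expect_def
      using jk by (intro sum.cong refl) (simp add: mulvec_gate_CNOT cnot_perm_involution)
    also have "\<dots> = (\<Sum>x\<in>basis n. \<Sum>y\<in>basis n. cnj (v x) * pauli n a b (?p x) (?p y) * v y)"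
      by (subst sum_cnot_perm[OF jk(3,2), symmetric], rule sum.cong[OF refl],
          subst sum_cnot_perm[OF jk(3,2), symmetric]) (simp add: cnot_perm_involution[OF jk(3)])
    also have "\<dots> = pauli_expect n v (?p a) (cnot_perm k j b)"
      unfolding pauli_expect_def expect_def using jk by (simp add: pauli_cnot_perm)
    finally show ?thesis .
  qed
  show "\<exists>a' b' c. cmod c = 1 \<and> pauli_expect n (mulvec n (gate_CNOT j k) v) a b = c * pauli_expect n v a' b'"
    for a b
    unfolding perm by (rule exI, rule exI, rule exI[of _ 1]) simp
  show "pauli_expect n (mulvec n (gate_CNOT j k) v) {} {} = pauli_expect n v {} {}"
    unfolding perm by (simp add: cnot_perm_def)
qed

lemma pauli_empty:
  assumes "x \<in> basis n" "y \<in> basis n"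
  shows "pauli n {} {} x y = (if x = y then 1 else 0)"
proof -
  have "pauli n {} {} x y = (\<Prod>i<n. if (i \<in> x \<longleftrightarrow> i \<in> y) then 1 else 0)"
    unfolding pauli_def tensor_def by (rule prod.cong) (auto simp: qpauli_def)
  also have "\<dots> = (if x = y then 1 else 0)"
    using assms by (subst prod_if_zero) (auto simp: basis_def)
  finally show ?thesis .
qed

lemma pauli_expect_empty: "pauli_expect n v {} {} = (\<Sum>x\<in>basis n. cnj (v x) * v x)"
proof -
  have "pauli_expect n v {} {} = (\<Sum>x\<in>basis n. \<Sum>y\<in>basis n. if y = x then cnj (v x) * v y else 0)"
    unfolding pauli_expect_def expect_def by (intro sum.cong refl) (auto simp: pauli_empty)
  then show ?thesis
    by simp
qed

lemma pauli_dichotomy_ket0: "pauli_dichotomy n ket0"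
proof -
  have expect_ket0: "pauli_expect n ket0 a b = pauli n a b {} {}" for a b
  proof -
    have "pauli_expect n ket0 a b = (\<Sum>x\<in>basis n. if x = {} then pauli n a b {} {} else 0)"
      unfolding pauli_expect_def expect_eq_inner mulvec_ket0 by (rule sum.cong) (auto simp: ket0_def)
    then show ?thesis
      by (simp add: basis_def)
  qed
  have "pauli n a b {} {} = (if \<forall>i<n. i \<notin> a then 1 else 0)" for a b
  proof -
    have "pauli n a b {} {} = (\<Prod>i<n. if i \<notin> a then 1 else 0)"
      unfolding pauli_def tensor_def by (rule prod.cong) (auto simp: qpauli_def)
    then show ?thesis
      by (simp add: prod_if_zero)
  qed
  then show ?thesis
    unfolding pauli_dichotomy_def expect_ket0 by simp
qed

lemma pauli_dichotomy_clifford: "C \<in> clifford n \<Longrightarrow> pauli_dichotomy n (mulvec n C ket0)"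
proof (induction rule: clifford.induct)
  case cl_id
  then show ?case
    by (simp add: mulvec_ident_ket0 pauli_dichotomy_ket0)
next
  case (cl_H C j)
  then show ?case
    by (simp add: mulvec_mmult pauli_dichotomy_H)
next
  case (cl_S C j)
  then show ?case
    by (simp add: mulvec_mmult pauli_dichotomy_S)
next
  case (cl_CNOT C j k)
  then show ?case
    by (simp add: mulvec_mmult pauli_dichotomy_CNOT)
qed

lemma sum_pauli_X_all:
  assumes "x \<in> basis n" "y \<in> basis n"
  shows "(\<Sum>b\<in>basis n. pauli n {..<n} b x y) = (if x = {..<n} \<and> y = {} then 2 ^ n else 0)"
proof -
  have "(\<Sum>b\<in>basis n. pauli n {..<n} b x y)
      = (\<Sum>b\<in>Pow {..<n}. \<Prod>i<n. (\<lambda>i c. qpauli (i \<in> {..<n}) c (i \<in> x) (i \<in> y)) i (i \<in> b))"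
    unfolding pauli_def tensor_def basis_def by simp
  also have "\<dots> = (\<Prod>i<n. qpauli (i \<in> {..<n}) False (i \<in> x) (i \<in> y)
                        + qpauli (i \<in> {..<n}) True (i \<in> x) (i \<in> y))"
    by (rule sum_Pow_prod)
  also have "\<dots> = (\<Prod>i<n. if i \<in> x \<and> i \<notin> y then 2 else 0)"
    by (rule prod.cong) (auto simp: qpauli_def)
  also have "\<dots> = (if x = {..<n} \<and> y = {} then 2 ^ n else 0)"
    using assms by (subst prod_if_zero) (auto simp: basis_def)
  finally show ?thesis .
qed

lemma pauli_X_all_row:
  assumes "y \<in> basis n"
  shows "pauli n {..<n} b {..<n} y = (if y = {} then 1 else 0)"
proof -
  have "pauli n {..<n} b {..<n} y = (\<Prod>i<n. if i \<notin> y then 1 else 0)"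
    unfolding pauli_def tensor_def by (rule prod.cong) (auto simp: qpauli_def)
  also have "\<dots> = (if y = {} then 1 else 0)"
    using assms by (subst prod_if_zero) (auto simp: basis_def)
  finally show ?thesis .
qed

lemma sum_pauli_expect_X_all:
  "(\<Sum>b\<in>basis n. pauli_expect n v {..<n} b) = cnj (v {..<n}) * 2 ^ n * v {}"
proof -
  have full: "{..<n} \<in> basis n" and empty: "{} \<in> basis n"
    by (auto simp: basis_def)
  have "(\<Sum>b\<in>basis n. pauli_expect n v {..<n} b)
      = (\<Sum>x\<in>basis n. \<Sum>y\<in>basis n. cnj (v x) * (\<Sum>b\<in>basis n. pauli n {..<n} b x y) * v y)"
    unfolding pauli_expect_def expect_def
    by (subst sum.swap, rule sum.cong[OF refl], subst sum.swap)
       (simp add: sum_distrib_left sum_distrib_right)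
  also have "\<dots> = (\<Sum>x\<in>basis n. if x = {..<n} then cnj (v x) * 2 ^ n * v {} else 0)"
  proof (intro sum.cong refl)
    fix x
    assume x: "x \<in> basis n"
    have "(\<Sum>y\<in>basis n. cnj (v x) * (\<Sum>b\<in>basis n. pauli n {..<n} b x y) * v y)
        = (\<Sum>y\<in>basis n. if y = {} then (if x = {..<n} then cnj (v x) * 2 ^ n * v y else 0) else 0)"
      by (intro sum.cong refl) (auto simp: sum_pauli_X_all x)
    then show "(\<Sum>y\<in>basis n. cnj (v x) * (\<Sum>b\<in>basis n. pauli n {..<n} b x y) * v y)
        = (if x = {..<n} then cnj (v x) * 2 ^ n * v {} else 0)"
      using empty by simp
  qed
  also have "\<dots> = cnj (v {..<n}) * 2 ^ n * v {}"
    using full by simp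
  finally show ?thesis .
qed

lemma inner_unimodular_imp_parallel:
  assumes "finite S" and v: "(\<Sum>x\<in>S. cnj (v x) * v x) = 1" and w: "(\<Sum>x\<in>S. cnj (w x) * w x) = 1"
    and E: "E = (\<Sum>x\<in>S. cnj (v x) * w x)" "cmod E = 1"
  shows "\<forall>x\<in>S. w x = E * v x"
proof -
  have "(\<Sum>x\<in>S. cnj (w x - E * v x) * (w x - E * v x))
      = (\<Sum>x\<in>S. cnj (w x) * w x) - cnj E * (\<Sum>x\<in>S. cnj (v x) * w x)
        - E * cnj (\<Sum>x\<in>S. cnj (v x) * w x) + E * cnj E * (\<Sum>x\<in>S. cnj (v x) * v x)"
    by (simp add: algebra_simps sum.distrib sum_subtractf sum_distrib_left)
  also have "\<dots> = 1 - cnj E * E"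
    using v w E(1)[symmetric] by (simp add: mult.commute)
  also have "\<dots> = 0"
    using E(2) by (simp add: cnj_mult_self)
  finally have "complex_of_real (\<Sum>x\<in>S. (cmod (w x - E * v x))\<^sup>2) = 0"
    by (simp only: cnj_mult_self of_real_sum)
  then have "(\<Sum>x\<in>S. (cmod (w x - E * v x))\<^sup>2) = 0"
    by (simp only: of_real_eq_0_iff)
  then show ?thesis
    using assms(1) by (simp add: sum_nonneg_eq_0_iff)
qed

lemma pauli_dichotomy_corner_cmod:
  assumes v: "pauli_dichotomy n v" and nz: "v {} \<noteq> 0" "v {..<n} \<noteq> 0"
  shows "cmod (v {}) = cmod (v {..<n})"
proof -
  have full: "{..<n} \<in> basis n" and empty: "{} \<in> basis n"
    by (auto simp: basis_def)
  have "(\<Sum>b\<in>basis n. pauli_expect n v {..<n} b) \<noteq> 0"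
    using nz by (simp add: sum_pauli_expect_X_all)
  then obtain b where "pauli_expect n v {..<n} b \<noteq> 0"
    by (meson sum.neutral)
  then have E: "cmod (pauli_expect n v {..<n} b) = 1"
    using v by (auto simp: pauli_dichotomy_def)
  define w where "w = mulvec n (pauli n {..<n} b) v"
  have norm_v: "(\<Sum>x\<in>basis n. cnj (v x) * v x) = 1"
    using v by (simp add: pauli_dichotomy_def pauli_expect_empty)
  have "pauli_expect n w {} {} = pauli_expect n v {} {}"
    unfolding w_def pauli_expect_def expect_mulvec
    by (simp add: pauli_def conj_tensor qconj_qpauli_identity)
  then have norm_w: "(\<Sum>x\<in>basis n. cnj (w x) * w x) = 1"
    using norm_v by (simp add: pauli_expect_empty)
  have "pauli_expect n v {..<n} b = (\<Sum>x\<in>basis n. cnj (v x) * w x)"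
    unfolding w_def pauli_expect_def expect_eq_inner ..
  then have "w {..<n} = pauli_expect n v {..<n} b * v {..<n}"
    using inner_unimodular_imp_parallel[OF finite_basis norm_v norm_w _ E] full by blast
  moreover have "w {..<n} = v {}"
  proof -
    have "w {..<n} = (\<Sum>y\<in>basis n. if y = {} then v y else 0)"
      unfolding w_def mulvec_def by (intro sum.cong refl) (simp add: pauli_X_all_row)
    then show ?thesis
      using empty by simp
  qed
  ultimately show ?thesis
    using E by (simp add: norm_mult)
qed

lemma stab_state_corner_cmod:
  assumes "s \<in> stab_states n"
  shows "cmod (s {}) = cmod (s {..<n}) \<or> s {} = 0 \<or> s {..<n} = 0"
proof -
  obtain C where "C \<in> clifford n" "s = mulvec n C ket0"
    using assms by (auto simp: stab_states_def)
  then have "pauli_dichotomy n s"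
    using pauli_dichotomy_clifford by simp
  then show ?thesis
    using pauli_dichotomy_corner_cmod by blast
qed

lemma Re_mult_cnj_le_cmod_sq:
  assumes "cmod a = cmod b \<or> a = 0 \<or> b = 0"
  shows "Re (a * cnj b) \<le> (cmod a)\<^sup>2" "Re (a * cnj b) \<le> (cmod b)\<^sup>2"
proof -
  have "Re (a * cnj b) \<le> cmod a * cmod b"
    using complex_Re_le_cmod[of "a * cnj b"] by (simp add: norm_mult)
  then show "Re (a * cnj b) \<le> (cmod a)\<^sup>2" "Re (a * cnj b) \<le> (cmod b)\<^sup>2"
    using assms by (auto simp: power2_eq_square)
qed

lemma stab_poly_corner_bounds:
  assumes "\<rho> \<in> stab_poly n"
  shows "Re (\<rho> {} {..<n}) \<le> Re (\<rho> {} {}) \<and> Re (\<rho> {} {..<n}) \<le> Re (\<rho> {..<n} {..<n})"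
proof -
  obtain I :: "nat set" and w :: "nat \<Rightarrow> real" and s :: "nat \<Rightarrow> qvec"
    where I: "finite I" "\<forall>i\<in>I. w i \<ge> 0 \<and> s i \<in> stab_states n"
      and \<rho>: "meq n \<rho> (\<lambda>x y. \<Sum>i\<in>I. complex_of_real (w i) * proj (s i) x y)"
    using assms unfolding stab_poly_def by blast
  have corners: "{} \<in> basis n" "{..<n} \<in> basis n"
    by (auto simp: basis_def)
  have Re_\<rho>: "Re (\<rho> x y) = (\<Sum>i\<in>I. w i * Re (s i x * cnj (s i y)))"
    if "x \<in> basis n" "y \<in> basis n" for x y
    using \<rho> that by (simp add: meq_def proj_def Re_sum)
  have diag: "Re (s i x * cnj (s i x)) = (cmod (s i x))\<^sup>2" for i x
    by (simp add: complex_mult_cnj cmod_power2)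
  show ?thesis
    unfolding Re_\<rho>[OF corners(1) corners(2)] Re_\<rho>[OF corners(1) corners(1)] Re_\<rho>[OF corners(2) corners(2)] diag
    using I stab_state_corner_cmod Re_mult_cnj_le_cmod_sq by (auto intro!: sum_mono mult_left_mono)
qed

section \<open>A stabilizer decomposition of the damped state\<close>

lemma gates_vanish_outside_basis:
  assumes "z \<notin> basis n" "y \<in> basis n" "j < n" "k < n"
  shows "gate_H j z y = 0" "gate_S j z y = 0" "gate_CNOT j k z y = 0"
proof -
  obtain e where e: "e \<in> z" "e \<ge> n"
    using assms(1) unfolding basis_def by (metis PowI lessThan_iff not_less subsetI)
  moreover have "e \<notin> y" "e \<noteq> j"
    using e assms(2,3) by (auto simp: basis_def)
  ultimately have "z - {j} \<noteq> y - {j}"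
    by blast
  then show "gate_H j z y = 0"
    by (simp add: gate_H_def)
  show "gate_S j z y = 0"
    using assms(1,2) by (auto simp: gate_S_def)
  have "z \<noteq> cnot_perm j k y"
    using assms(1) cnot_perm_basis[OF assms(4,2)] by metis
  then show "gate_CNOT j k z y = 0"
    unfolding gate_CNOT_def cnot_perm_def[symmetric] by simp
qed

lemma stab_state_vanish_outside_basis: "s \<in> stab_states n \<Longrightarrow> z \<notin> basis n \<Longrightarrow> s z = 0"
proof -
  have "mulvec n C ket0 z = 0" if "C \<in> clifford n" "z \<notin> basis n" for C z
    using that
  proof (induction arbitrary: z rule: clifford.induct)
    case cl_id
    then have "z \<noteq> {}"
      by (auto simp: basis_def)
    then show ?case
      unfolding mulvec_ident_ket0 by (simp add: ket0_def)
  next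
    case (cl_H C j)
    then show ?case
      unfolding mulvec_mmult by (subst mulvec_def) (auto intro!: sum.neutral simp: gates_vanish_outside_basis)
  next
    case (cl_S C j)
    then show ?case
      unfolding mulvec_mmult by (subst mulvec_def) (auto intro!: sum.neutral simp: gates_vanish_outside_basis)
  next
    case (cl_CNOT C j k)
    then show ?case
      unfolding mulvec_mmult by (subst mulvec_def) (auto intro!: sum.neutral simp: gates_vanish_outside_basis)
  qed
  then show "s \<in> stab_states n \<Longrightarrow> z \<notin> basis n \<Longrightarrow> s z = 0"
    unfolding stab_states_def by blast
qed

lemma stab_states_eq_on_basis:
  assumes "v \<in> stab_states n" "\<forall>z\<in>basis n. w z = v z" "\<forall>z. z \<notin> basis n \<longrightarrow> w z = 0"
  shows "w \<in> stab_states n"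
proof -
  have "w = v"
    using assms stab_state_vanish_outside_basis by (intro ext) metis
  then show ?thesis
    using assms(1) by simp
qed

lemma stab_states_mulvec:
  assumes "v \<in> stab_states n" "\<And>C. C \<in> clifford n \<Longrightarrow> mmult n G C \<in> clifford n"
  shows "mulvec n G v \<in> stab_states n"
proof -
  obtain C where C: "C \<in> clifford n" "v = mulvec n C ket0"
    using assms(1) by (auto simp: stab_states_def)
  then have "mulvec n G v = mulvec n (mmult n G C) ket0"
    by (simp add: mulvec_mmult)
  then show ?thesis
    using assms(2)[OF C(1)] by (auto simp: stab_states_def)
qed

lemma stab_states_H: "v \<in> stab_states n \<Longrightarrow> j < n \<Longrightarrow> mulvec n (gate_H j) v \<in> stab_states n"
  by (erule stab_states_mulvec) (simp add: clifford.cl_H)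

lemma stab_states_S: "v \<in> stab_states n \<Longrightarrow> j < n \<Longrightarrow> mulvec n (gate_S j) v \<in> stab_states n"
  by (erule stab_states_mulvec) (simp add: clifford.cl_S)

lemma stab_states_CNOT:
  "v \<in> stab_states n \<Longrightarrow> j < n \<Longrightarrow> k < n \<Longrightarrow> j \<noteq> k \<Longrightarrow> mulvec n (gate_CNOT j k) v \<in> stab_states n"
  by (erule stab_states_mulvec) (simp add: clifford.cl_CNOT)

lemma ket0_stab_state: "ket0 \<in> stab_states n"
proof -
  have "mulvec n ident ket0 \<in> stab_states n"
    unfolding stab_states_def using clifford.cl_id by blast
  then show ?thesis
    by (simp only: mulvec_ident_ket0)
qed

lemma qH_qS_qS_qH: "qmult qH (qmult qS (qmult qS qH)) = qpauli True False"
proof (intro ext)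
  fix u w
  show "qmult qH (qmult qS (qmult qS qH)) u w = qpauli True False u w"
    by (cases u; cases w) (simp_all add: qmult_def qH_def qS_def qpauli_def field_simps of_real_sqrt2_sq)
qed

lemma qmult_qid: "qmult qid qid = qid"
  by (intro ext) (simp add: qmult_def qid_def)

lemma mulvec_gates_HSSH:
  assumes j: "j < n" and z: "z \<in> basis n"
  shows "mulvec n (gate_H j) (mulvec n (gate_S j) (mulvec n (gate_S j) (mulvec n (gate_H j) v))) z
           = v (toggle j z)"
proof -
  let ?H = "tensor n (\<lambda>i. if i = j then qH else qid)" and ?S = "tensor n (\<lambda>i. if i = j then qS else qid)"
  let ?X = "tensor n (\<lambda>i. if i = j then qpauli True False else qid)"
  have "meq n (mmult n (gate_H j) (mmult n (gate_S j) (mmult n (gate_S j) (gate_H j))))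
              (mmult n ?H (mmult n ?S (mmult n ?S ?H)))"
    using j by (intro mmult_meq meq_gate_H meq_gate_S)
  moreover have "mmult n ?H (mmult n ?S (mmult n ?S ?H)) = ?X"
    unfolding mmult_tensor by (rule arg_cong[where f = "tensor n"]) (auto simp: qH_qS_qS_qH qmult_qid)
  ultimately have "mulvec n (gate_H j) (mulvec n (gate_S j) (mulvec n (gate_S j) (mulvec n (gate_H j) v))) z
      = mulvec n ?X v z"
    unfolding mulvec_mmult[symmetric] using mulvec_meq z by simp
  also have "\<dots> = (\<Sum>y\<in>basis n. if y = toggle j z then v y else 0)"
    unfolding mulvec_def
  proof (intro sum.cong refl)
    fix y
    assume y: "y \<in> basis n"
    have "qpauli True False (j \<in> z) (j \<in> y) * (if z - {j} = y - {j} then 1 else 0)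
        = (if y = toggle j z then 1 else 0)"
      by (auto simp: qpauli_def toggle_def)
    then show "?X z y * v y = (if y = toggle j z then v y else 0)"
      unfolding tensor_local[OF j z y] by simp
  qed
  also have "\<dots> = v (toggle j z)"
  proof -
    have "toggle j z \<in> basis n"
      using z j by (auto simp: toggle_def basis_def)
    then show ?thesis
      by simp
  qed
  finally show ?thesis .
qed

lemma stab_states_X:
  assumes v: "v \<in> stab_states n" and j: "j < n"
  shows "(\<lambda>z. if z \<in> basis n then v (toggle j z) else 0) \<in> stab_states n"
proof (rule stab_states_eq_on_basis)
  show "mulvec n (gate_H j) (mulvec n (gate_S j) (mulvec n (gate_S j) (mulvec n (gate_H j) v))) \<in> stab_states n"
    using v j by (intro stab_states_H stab_states_S)
  show "\<forall>z\<in>basis n. (if z \<in> basis n then v (toggle j z) else 0)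
      = mulvec n (gate_H j) (mulvec n (gate_S j) (mulvec n (gate_S j) (mulvec n (gate_H j) v))) z"
    using j by (simp add: mulvec_gates_HSSH)
qed simp

definition basis_ket :: "nat set \<Rightarrow> qvec" where
  "basis_ket x = (\<lambda>z. if z = x then 1 else 0)"

definition ghz :: "nat \<Rightarrow> qvec" where
  "ghz m = (\<lambda>z. if z = {} \<or> z = {..<m} then complex_of_real (1 / sqrt 2) else 0)"

lemma basis_ket_stab_state: "x \<in> basis n \<Longrightarrow> basis_ket x \<in> stab_states n"
proof -
  have "finite x \<Longrightarrow> x \<subseteq> {..<n} \<Longrightarrow> basis_ket x \<in> stab_states n"
  proof (induction x rule: finite_induct)
    case empty
    then show ?case
      using ket0_stab_state by (simp add: basis_ket_def ket0_def)
  next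
    case (insert k x)
    have "(\<lambda>z. if z \<in> basis n then basis_ket x (toggle k z) else 0) \<in> stab_states n"
      using insert by (intro stab_states_X) auto
    moreover have "(\<lambda>z. if z \<in> basis n then basis_ket x (toggle k z) else 0) = basis_ket (insert k x)"
    proof (intro ext)
      fix z
      have "insert k x \<in> basis n"
        using insert by (auto simp: basis_def)
      moreover have "toggle k z = x \<longleftrightarrow> z = insert k x"
        using insert(2) by (auto simp: toggle_def)
      ultimately show "(if z \<in> basis n then basis_ket x (toggle k z) else 0) = basis_ket (insert k x) z"
        by (auto simp: basis_ket_def)
    qed
    ultimately show ?case
      by simp
  qed
  then show "x \<in> basis n \<Longrightarrow> basis_ket x \<in> stab_states n"
    by (auto simp: basis_def intro: finite_subset)
qed

lemma mulvec_gate_H_ket0: "0 < n \<Longrightarrow> mulvec n (gate_H 0) ket0 = ghz 1"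
proof (intro ext)
  fix z :: "nat set"
  have "z - {0} = {} \<longleftrightarrow> z = {} \<or> z = {..<1}"
    using subset_singleton_iff[of z 0] by (auto simp: lessThan_Suc)
  then show "mulvec n (gate_H 0) ket0 z = ghz 1 z"
    unfolding mulvec_ket0 by (simp add: gate_H_def ghz_def)
qed

lemma mulvec_gate_CNOT_ghz:
  assumes m: "0 < m" "m < n" and z: "z \<in> basis n"
  shows "mulvec n (gate_CNOT 0 m) (ghz m) z = ghz (Suc m) z"
proof -
  have "cnot_perm 0 m {} = {}" "cnot_perm 0 m {..<Suc m} = {..<m}"
    using m by (auto simp: cnot_perm_def toggle_def)
  then have "cnot_perm 0 m z = {} \<longleftrightarrow> z = {}" "cnot_perm 0 m z = {..<m} \<longleftrightarrow> z = {..<Suc m}"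
    using cnot_perm_involution[of 0 m] m by (metis not_less_zero)+
  then show ?thesis
    using m z by (simp add: mulvec_gate_CNOT ghz_def)
qed

lemma ghz_stab_state: "1 \<le> m \<Longrightarrow> m \<le> n \<Longrightarrow> ghz m \<in> stab_states n"
proof (induction m)
  case 0
  then show ?case
    by simp
next
  case (Suc m)
  show ?case
  proof (cases "m = 0")
    case True
    then show ?thesis
      using Suc ket0_stab_state stab_states_H[of ket0 n 0] by (simp add: mulvec_gate_H_ket0)
  next
    case False
    show ?thesis
    proof (rule stab_states_eq_on_basis)
      show "mulvec n (gate_CNOT 0 m) (ghz m) \<in> stab_states n"
        using Suc False by (intro stab_states_CNOT) auto
      show "\<forall>z\<in>basis n. ghz (Suc m) z = mulvec n (gate_CNOT 0 m) (ghz m) z"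
        using Suc False by (simp add: mulvec_gate_CNOT_ghz)
      have "{} \<in> basis n" "{..<Suc m} \<in> basis n"
        using Suc by (auto simp: basis_def)
      then show "\<forall>z. z \<notin> basis n \<longrightarrow> ghz (Suc m) z = 0"
        by (auto simp: ghz_def)
    qed
  qed
qed

lemma ghz_proj:
  "proj (ghz m) x y = (if (x = {} \<or> x = {..<m}) \<and> (y = {} \<or> y = {..<m}) then 1 / 2 else 0)"
proof -
  have "complex_of_real (1 / sqrt 2) * complex_of_real (1 / sqrt 2) = 1 / 2"
    by (simp flip: of_real_mult)
  then show ?thesis
    by (simp add: proj_def ghz_def)
qed

lemma stab_poly_intro:
  fixes f :: "'i \<Rightarrow> nat"
  assumes "finite I" "inj_on f I"
    and "\<forall>i\<in>I. w i \<ge> 0 \<and> s i \<in> stab_states n" "(\<Sum>i\<in>I. w i) = 1"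
    and "meq n \<rho> (\<lambda>x y. \<Sum>i\<in>I. complex_of_real (w i) * proj (s i) x y)"
  shows "\<rho> \<in> stab_poly n"
proof -
  let ?g = "the_inv_into I f"
  have reindex: "(\<Sum>k\<in>f ` I. h (?g k)) = (\<Sum>i\<in>I. h i)" for h :: "'i \<Rightarrow> 'b::comm_monoid_add"
    using assms(2) by (simp add: sum.reindex the_inv_into_f_f)
  show ?thesis
    unfolding stab_poly_def mem_Collect_eq
  proof (intro exI conjI)
    show "finite (f ` I)"
      using assms(1) by simp
    show "\<forall>k\<in>f ` I. 0 \<le> w (?g k) \<and> s (?g k) \<in> stab_states n"
      using assms(2,3) by (simp add: the_inv_into_f_f)
    show "(\<Sum>k\<in>f ` I. w (?g k)) = 1"
      using assms(4) by (simp add: reindex)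
    show "meq n \<rho> (\<lambda>x y. \<Sum>k\<in>f ` I. complex_of_real (w (?g k)) * proj (s (?g k)) x y)"
      unfolding meq_def
    proof (intro ballI)
      fix x y
      assume "x \<in> basis n" "y \<in> basis n"
      then show "\<rho> x y = (\<Sum>k\<in>f ` I. complex_of_real (w (?g k)) * proj (s (?g k)) x y)"
        using assms(5) reindex[of "\<lambda>i. complex_of_real (w i) * proj (s i) x y"] by (simp add: meq_def)
    qed
  qed
qed

text \<open>Subtracting the coherence \<open>c\<close> from the two corner populations leaves the diagonal
  weights of the decomposition \<open>\<rho> = 2c |GHZ\<rangle>\<langle>GHZ| + \<Sum>\<^sub>x w\<^sub>x |x\<rangle>\<langle>x|\<close>.\<close>

definition diag_weight :: "nat \<Rightarrow> real \<Rightarrow> real \<Rightarrow> (nat \<Rightarrow> real) \<Rightarrow> nat set \<Rightarrow> real" where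
  "diag_weight n a b g x = damped_ghz n a b g x x
     - (if x = {} \<or> x = {..<n} then a * b * branch_amp n g {..<n} else 0)"

lemma damped_ghz_as_mixture:
  assumes n1: "n \<ge> 1" and xy: "x \<in> basis n" "y \<in> basis n"
  shows "complex_of_real (damped_ghz n a b g x y)
    = complex_of_real (2 * (a * b * branch_amp n g {..<n})) * proj (ghz n) x y
      + (\<Sum>z\<in>basis n. complex_of_real (diag_weight n a b g z) * proj (basis_ket z) x y)"
proof -
  have "(\<Sum>z\<in>basis n. complex_of_real (diag_weight n a b g z) * proj (basis_ket z) x y)
      = (\<Sum>z\<in>basis n. if z = x then (if x = y then complex_of_real (diag_weight n a b g x) else 0) else 0)"
    by (intro sum.cong refl) (auto simp: proj_def basis_ket_def)
  also have "\<dots> = (if x = y then complex_of_real (diag_weight n a b g x) else 0)"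
    using xy by simp
  finally show ?thesis
    using empty_neq_lessThan[OF n1] unfolding ghz_proj
    by (cases "x = y"; cases "x = {}"; cases "y = {}"; cases "x = {..<n}"; cases "y = {..<n}")
       (simp_all add: damped_ghz_def diag_weight_def)
qed

lemma damp_psi_in_stab_poly:
  assumes n1: "n \<ge> 1" and g: "\<forall>i<n. 0 \<le> g i \<and> g i \<le> 1" and ab: "a\<^sup>2 + b\<^sup>2 = 1"
    and c0: "0 \<le> a * b * branch_amp n g {..<n}"
    and c_le_0: "a * b * branch_amp n g {..<n} \<le> damped_ghz n a b g {} {}"
    and c_le_1: "a * b * branch_amp n g {..<n} \<le> damped_ghz n a b g {..<n} {..<n}"
  shows "damp n g (proj (psi n a b)) \<in> stab_poly n"
proof -
  define c where "c = a * b * branch_amp n g {..<n}"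
  define I where "I = insert None (Some ` basis n)"
  define w where "w = case_option (2 * c) (diag_weight n a b g)"
  define s where "s = case_option (ghz n) basis_ket"
  define f :: "nat set option \<Rightarrow> nat" where "f = case_option 0 (\<lambda>x. Suc (set_encode x))"
  show ?thesis
  proof (rule stab_poly_intro[of I f w s])
    show "finite I"
      by (simp add: I_def)
    have "inj_on set_encode (basis n)"
      by (rule inj_on_subset[OF inj_on_set_encode]) (auto simp: basis_def intro: finite_subset)
    then show "inj_on f I"
      by (auto simp: I_def f_def inj_on_def)
    have "0 \<le> diag_weight n a b g x" for x
      using c_le_0 c_le_1 branch_prob_nonneg[OF g, of x] empty_neq_lessThan[OF n1]
      by (auto simp: diag_weight_def damped_ghz_diag[OF n1])
    then show "\<forall>i\<in>I. 0 \<le> w i \<and> s i \<in> stab_states n"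
      using c0 ghz_stab_state[of n n] n1 basis_ket_stab_state
      by (auto simp: I_def w_def s_def c_def)
    have "(\<Sum>x\<in>basis n. diag_weight n a b g x)
        = (\<Sum>x\<in>basis n. damped_ghz n a b g x x - ((if x = {} then c else 0) + (if x = {..<n} then c else 0)))"
      using empty_neq_lessThan[OF n1] by (intro sum.cong refl) (auto simp: diag_weight_def c_def)
    also have "\<dots> = 1 - 2 * c"
      using sum_damped_ghz_diag[OF n1 ab] by (simp add: sum_subtractf sum.distrib basis_def)
    finally show "(\<Sum>i\<in>I. w i) = 1"
      by (simp add: I_def w_def sum.reindex)
    show "meq n (damp n g (proj (psi n a b))) (\<lambda>x y. \<Sum>i\<in>I. complex_of_real (w i) * proj (s i) x y)"
      unfolding meq_def
      by (simp add: I_def w_def s_def c_def sum.reindex damp_psi_entry[OF n1 g] damped_ghz_as_mixture[OF n1])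
  qed
qed

lemma damp_psi_in_stab_poly_iff:
  assumes n1: "n \<ge> 1" and g: "\<forall>i<n. 0 \<le> g i \<and> g i \<le> 1" and ab: "a\<^sup>2 + b\<^sup>2 = 1" "0 \<le> a * b"
  defines "\<rho> \<equiv> damp n g (proj (psi n a b))"
  shows "\<rho> \<in> stab_poly n \<longleftrightarrow> Re (\<rho> {} {..<n}) \<le> Re (\<rho> {} {}) \<and> Re (\<rho> {} {..<n}) \<le> Re (\<rho> {..<n} {..<n})"
proof
  assume "\<rho> \<in> stab_poly n"
  then show "Re (\<rho> {} {..<n}) \<le> Re (\<rho> {} {}) \<and> Re (\<rho> {} {..<n}) \<le> Re (\<rho> {..<n} {..<n})"
    by (rule stab_poly_corner_bounds)
next
  have corners: "{} \<in> basis n" "{..<n} \<in> basis n"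
    by (auto simp: basis_def)
  have "0 \<le> a * b * branch_amp n g {..<n}"
    using ab(2) branch_amp_nonneg[OF g] by simp
  moreover assume "Re (\<rho> {} {..<n}) \<le> Re (\<rho> {} {}) \<and> Re (\<rho> {} {..<n}) \<le> Re (\<rho> {..<n} {..<n})"
  then have "a * b * branch_amp n g {..<n} \<le> damped_ghz n a b g {} {}"
    and "a * b * branch_amp n g {..<n} \<le> damped_ghz n a b g {..<n} {..<n}"
    using empty_neq_lessThan[OF n1]
    by (simp_all add: \<rho>_def damp_psi_entry[OF n1 g] corners damped_ghz_def)
  ultimately show "\<rho> \<in> stab_poly n"
    unfolding \<rho>_def by (rule damp_psi_in_stab_poly[OF n1 g ab(1)])
qed

section \<open>Trace norm of the partial transpose\<close>

lemma mmult_ident_right: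
  assumes "y \<in> basis n"
  shows "mmult n A ident x y = A x y"
proof -
  have "mmult n A ident x y = (\<Sum>z\<in>basis n. if z = y then A x y else 0)"
    unfolding mmult_def ident_def by (rule sum.cong) auto
  then show ?thesis
    using assms by simp
qed

lemma unitary_col_norm:
  assumes "unitary n U" "z \<in> basis n"
  shows "(\<Sum>x\<in>basis n. (cmod (U x z))\<^sup>2) = 1"
proof -
  have "mmult n (adj U) U z z = 1"
    using assms by (simp add: unitary_def meq_def ident_def)
  then have "(\<Sum>x\<in>basis n. cnj (U x z) * U x z) = 1"
    by (simp add: mmult_def adj_def)
  then have "complex_of_real (\<Sum>x\<in>basis n. (cmod (U x z))\<^sup>2) = 1"
    by (simp only: cnj_mult_self of_real_sum)
  then show ?thesis
    by (simp only: of_real_eq_1_iff)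
qed

lemma unitary_entry_le_1:
  assumes "unitary n U" "x \<in> basis n" "z \<in> basis n"
  shows "cmod (U x z) \<le> 1"
proof -
  have "(cmod (U x z))\<^sup>2 \<le> (\<Sum>x\<in>basis n. (cmod (U x z))\<^sup>2)"
    by (rule member_le_sum) (use assms in auto)
  then have "(cmod (U x z))\<^sup>2 \<le> 1"
    using unitary_col_norm[OF assms(1,3)] by simp
  then show ?thesis
    by (simp add: power_le_one_iff abs_le_square_iff[symmetric])
qed

lemma unitary_norm_preserving:
  assumes "unitary n U"
  shows "(\<Sum>x\<in>basis n. (cmod (mulvec n U u x))\<^sup>2) = (\<Sum>x\<in>basis n. (cmod (u x))\<^sup>2)"
proof -
  have norm_sq: "expect n v ident = complex_of_real (\<Sum>x\<in>basis n. (cmod (v x))\<^sup>2)" for v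
  proof -
    have "expect n v ident = (\<Sum>x\<in>basis n. cnj (v x) * v x)"
      by (simp add: expect_eq_inner mulvec_ident)
    then show ?thesis
      by (simp only: cnj_mult_self of_real_sum)
  qed
  have "mmult n (mmult n (adj U) ident) U = mmult n (adj U) U"
    unfolding mmult_def[of n "mmult n (adj U) ident"] mmult_def[of n "adj U" U]
    by (intro ext sum.cong refl) (simp add: mmult_ident_right)
  then have "expect n (mulvec n U u) ident = expect n u ident"
    using assms unfolding expect_mulvec unitary_def by (intro expect_cong) auto
  then show ?thesis
    unfolding norm_sq by (simp only: of_real_eq_iff)
qed

lemma unitary_ident: "unitary n ident"
  unfolding unitary_def meq_def by (simp add: mmult_ident_right) (simp add: adj_def ident_def)

lemma mtrace_mmult: "mtrace n (mmult n U M) = (\<Sum>x\<in>basis n. \<Sum>z\<in>basis n. U x z * M z x)"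
  unfolding mtrace_def mmult_def ..

lemma cmod_trace_le_sum_cmod:
  assumes "unitary n U"
  shows "cmod (mtrace n (mmult n U M)) \<le> (\<Sum>x\<in>basis n. \<Sum>z\<in>basis n. cmod (M z x))"
proof -
  have "cmod (mtrace n (mmult n U M)) \<le> (\<Sum>x\<in>basis n. \<Sum>z\<in>basis n. cmod (U x z * M z x))"
    unfolding mtrace_mmult by (rule order_trans[OF norm_sum sum_mono[OF norm_sum]])
  also have "\<dots> \<le> (\<Sum>x\<in>basis n. \<Sum>z\<in>basis n. cmod (M z x))"
    using unitary_entry_le_1[OF assms]
    by (intro sum_mono) (simp add: norm_mult mult_left_le_one_le)
  finally show ?thesis .
qed

lemma trace_norm_ge:
  assumes "unitary n U"
  shows "cmod (mtrace n (mmult n U M)) \<le> trace_norm n M"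
  unfolding trace_norm_def
proof (rule cSup_upper)
  show "cmod (mtrace n (mmult n U M)) \<in> {cmod (mtrace n (mmult n U M)) |U. unitary n U}"
    using assms by blast
  show "bdd_above {cmod (mtrace n (mmult n U M)) |U. unitary n U}"
    using cmod_trace_le_sum_cmod unfolding bdd_above_def by blast
qed

lemma trace_norm_le:
  assumes "\<And>U. unitary n U \<Longrightarrow> cmod (mtrace n (mmult n U M)) \<le> K"
  shows "trace_norm n M \<le> K"
  unfolding trace_norm_def using assms unitary_ident by (intro cSup_least) auto

lemma cmod_diag_trace_le:
  assumes "unitary n U" "\<forall>x\<in>basis n. e x \<ge> 0"
  shows "cmod (\<Sum>x\<in>basis n. U x x * complex_of_real (e x)) \<le> (\<Sum>x\<in>basis n. e x)"
proof -
  have "cmod (\<Sum>x\<in>basis n. U x x * complex_of_real (e x))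
      \<le> (\<Sum>x\<in>basis n. cmod (U x x * complex_of_real (e x)))"
    by (rule norm_sum)
  also have "\<dots> \<le> (\<Sum>x\<in>basis n. e x)"
    using assms unitary_entry_le_1[OF assms(1)]
    by (intro sum_mono) (simp add: norm_mult mult_left_le_one_le)
  finally show ?thesis .
qed

lemma cmod_rank_one_trace_le:
  assumes "unitary n U"
  shows "cmod (\<Sum>x\<in>basis n. u x * mulvec n U u x) \<le> (\<Sum>x\<in>basis n. (cmod (u x))\<^sup>2)"
proof -
  have "cmod (\<Sum>x\<in>basis n. u x * mulvec n U u x) \<le> (\<Sum>x\<in>basis n. cmod (u x) * cmod (mulvec n U u x))"
    by (rule order_trans[OF norm_sum]) (simp add: norm_mult)
  also have "\<dots> \<le> (\<Sum>x\<in>basis n. ((cmod (u x))\<^sup>2 + (cmod (mulvec n U u x))\<^sup>2) / 2)"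
  proof (intro sum_mono)
    fix x
    show "cmod (u x) * cmod (mulvec n U u x) \<le> ((cmod (u x))\<^sup>2 + (cmod (mulvec n U u x))\<^sup>2) / 2"
      using sum_squares_bound[of "cmod (u x)" "cmod (mulvec n U u x)"] by simp
  qed
  also have "\<dots> = (\<Sum>x\<in>basis n. (cmod (u x))\<^sup>2)"
    using unitary_norm_preserving[OF assms, of u]
    by (simp add: sum.distrib sum_divide_distrib[symmetric])
  finally show ?thesis .
qed

lemma cmod_trace_diag_plus_rank_one_le:
  assumes U: "unitary n U" and e: "\<forall>x\<in>basis n. e x \<ge> 0"
    and M: "\<forall>z\<in>basis n. \<forall>x\<in>basis n. M z x = complex_of_real (if z = x then e x else 0) + u z * u x"
  shows "cmod (mtrace n (mmult n U M)) \<le> (\<Sum>x\<in>basis n. e x) + (\<Sum>x\<in>basis n. (cmod (u x))\<^sup>2)"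
proof -
  have "mtrace n (mmult n U M)
      = (\<Sum>x\<in>basis n. \<Sum>z\<in>basis n. (if z = x then U x x * complex_of_real (e x) else 0) + u x * (U x z * u z))"
    unfolding mtrace_mmult using M by (intro sum.cong refl) (auto simp: algebra_simps)
  also have "\<dots> = (\<Sum>x\<in>basis n. U x x * complex_of_real (e x) + u x * mulvec n U u x)"
    by (simp add: sum.distrib mulvec_def sum_distrib_left)
  finally have "mtrace n (mmult n U M)
      = (\<Sum>x\<in>basis n. U x x * complex_of_real (e x)) + (\<Sum>x\<in>basis n. u x * mulvec n U u x)"
    by (simp add: sum.distrib)
  then show ?thesis
    using order_trans[OF norm_triangle_ineq add_mono[OF cmod_diag_trace_le[OF U e] cmod_rank_one_trace_le[OF U]]]
    by simp
qed

lemma sum_householder_trace: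
  fixes m :: "nat set \<Rightarrow> nat set \<Rightarrow> real"
  shows "(\<Sum>x\<in>basis n. \<Sum>z\<in>basis n. ((if x = z then 1 else 0) - k * v x * v z) * m z x)
           = (\<Sum>x\<in>basis n. m x x) - k * (\<Sum>x\<in>basis n. \<Sum>z\<in>basis n. v x * v z * m z x)"
proof -
  have row: "(\<Sum>z\<in>basis n. ((if x = z then 1 else 0) - k * v x * v z) * m z x)
      = m x x - k * (\<Sum>z\<in>basis n. v x * v z * m z x)" if "x \<in> basis n" for x
  proof -
    have "(\<Sum>z\<in>basis n. ((if x = z then 1 else 0) - k * v x * v z) * m z x)
        = (\<Sum>z\<in>basis n. (if z = x then m x x else 0) - k * (v x * v z * m z x))"
      by (intro sum.cong refl) (auto simp: algebra_simps)
    then show ?thesis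
      using that by (simp add: sum_subtractf sum_distrib_left)
  qed
  then show ?thesis
    by (simp add: sum_subtractf sum_distrib_left)
qed

lemma unitary_householder:
  assumes "(\<Sum>z\<in>basis n. v z * v z) = N" "N > 0"
  shows "unitary n (\<lambda>x y. complex_of_real ((if x = y then 1 else 0) - 2 / N * v x * v y))"
proof -
  define k where "k = 2 / N"
  define R where "R x y = (if x = y then 1 else 0) - k * v x * v y" for x y
  have kN: "k * k * N = 2 * k"
    using assms(2) unfolding k_def by (simp add: field_simps)
  have columns: "(\<Sum>z\<in>basis n. R z x * R z y) = (if x = y then 1 else 0)"
    if xy: "x \<in> basis n" "y \<in> basis n" for x y
  proof -
    have "(\<Sum>z\<in>basis n. R z x * R z y)
        = (\<Sum>z\<in>basis n. (if z = x then (if x = y then 1 else 0) else 0)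
            - (if z = y then k * v x * v y else 0) - (if z = x then k * v x * v y else 0)
            + k * k * v x * v y * (v z * v z))"
      unfolding R_def by (intro sum.cong refl) (auto simp: algebra_simps)
    also have "\<dots> = (if x = y then 1 else 0) - k * v x * v y - k * v x * v y + k * k * v x * v y * N"
      using xy assms(1) by (simp add: sum.distrib sum_subtractf sum_distrib_left[symmetric])
    also have "\<dots> = (if x = y then 1 else 0) - 2 * k * (v x * v y) + (k * k * N) * (v x * v y)"
      by (simp add: algebra_simps)
    finally show ?thesis
      unfolding kN by simp
  qed
  have gram: "mmult n (adj (\<lambda>x y. complex_of_real (R x y))) (\<lambda>x y. complex_of_real (R x y)) x y
      = complex_of_real (\<Sum>z\<in>basis n. R z x * R z y)" for x y
    unfolding mmult_def adj_def by (simp add: of_real_sum)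
  have "unitary n (\<lambda>x y. complex_of_real (R x y))"
    unfolding unitary_def meq_def gram by (simp add: columns ident_def)
  then show ?thesis
    unfolding R_def k_def .
qed

lemma negative_binary_form:
  fixes p q c :: real
  assumes "p \<ge> 0" "q \<ge> 0" "c > 0" "p * q < c\<^sup>2"
  obtains s t where "p * s\<^sup>2 + 2 * c * s * t + q * t\<^sup>2 < 0"
proof (cases "p > 0")
  case True
  have "p * c\<^sup>2 + 2 * c * c * (- p) + q * (- p)\<^sup>2 = p * (p * q - c\<^sup>2)"
    by (simp add: power2_eq_square algebra_simps)
  also have "\<dots> < 0"
    using True assms(4) by (simp add: mult_pos_neg)
  finally show ?thesis
    using that by blast
next
  case False
  then have "p = 0"
    using assms(1) by simp
  have "2 * c * (- (q + 1)) * c + q * c\<^sup>2 = - (c\<^sup>2 * (q + 2))"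
    by (simp add: power2_eq_square algebra_simps)
  also have "\<dots> < 0"
    using assms(2,3) by simp
  finally show ?thesis
    using that[of "- (q + 1)" c] \<open>p = 0\<close> by simp
qed

text \<open>The shape of every partial transpose of the damped state.\<close>

definition pair_mat :: "nat set \<Rightarrow> nat set \<Rightarrow> (nat set \<Rightarrow> real) \<Rightarrow> real \<Rightarrow> nat set \<Rightarrow> nat set \<Rightarrow> real" where
  "pair_mat A B d c x y = (if x = y then d x else 0) + (if (x = A \<and> y = B) \<or> (x = B \<and> y = A) then c else 0)"

locale pair_matrix =
  fixes n :: nat and A B :: "nat set" and d :: "nat set \<Rightarrow> real" and c :: real and M :: qmat
  assumes AB: "A \<in> basis n" "B \<in> basis n" "A \<noteq> B"
    and d_nonneg: "\<forall>x\<in>basis n. d x \<ge> 0" and d_sum: "(\<Sum>x\<in>basis n. d x) = 1" and c_pos: "c > 0"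
    and M_eq: "meq n M (\<lambda>x y. complex_of_real (pair_mat A B d c x y))"
begin

lemma trace_M: "mtrace n (mmult n U M) = (\<Sum>x\<in>basis n. \<Sum>z\<in>basis n. U x z * complex_of_real (pair_mat A B d c z x))"
  unfolding mtrace_mmult using M_eq by (intro sum.cong refl) (auto simp: meq_def)

lemma sum_pair_mat_diag: "(\<Sum>x\<in>basis n. pair_mat A B d c x x) = 1"
proof -
  have "(\<Sum>x\<in>basis n. pair_mat A B d c x x) = (\<Sum>x\<in>basis n. d x)"
    using AB(3) by (intro sum.cong refl) (auto simp: pair_mat_def)
  then show ?thesis
    using d_sum by simp
qed

lemma trace_norm_ge_1: "trace_norm n M \<ge> 1"
proof -
  have "mtrace n (mmult n ident M)
      = (\<Sum>x\<in>basis n. \<Sum>z\<in>basis n. if z = x then complex_of_real (pair_mat A B d c x x) else 0)"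
    unfolding trace_M ident_def by (intro sum.cong refl) auto
  also have "\<dots> = (\<Sum>x\<in>basis n. complex_of_real (pair_mat A B d c x x))"
    by simp
  also have "\<dots> = 1"
    using sum_pair_mat_diag by (simp flip: of_real_sum)
  finally show ?thesis
    using trace_norm_ge[OF unitary_ident, of n M] by simp
qed

text \<open>If \<open>c\<^sup>2 \<le> d A d B\<close>, the matrix is a nonnegative diagonal plus the rank-one
  \<open>u u\<^sup>T\<close> with \<open>u A = sqrt (d A)\<close>, \<open>u B = c / sqrt (d A)\<close>; both parts have trace norm equal to
  their trace, and the traces add up to one.\<close>

lemma diag_plus_rank_one_decomposition:
  assumes det: "c\<^sup>2 \<le> d A * d B"
  obtains e u where "\<forall>x\<in>basis n. e x \<ge> 0"
    and "\<forall>z\<in>basis n. \<forall>x\<in>basis n. M z x = complex_of_real (if z = x then e x else 0) + u z * u x"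
    and "(\<Sum>x\<in>basis n. e x) + (\<Sum>x\<in>basis n. (cmod (u x))\<^sup>2) = 1"
proof -
  have "0 < c\<^sup>2"
    using c_pos by simp
  then have dA: "d A > 0"
    using det d_nonneg AB by (auto simp: zero_less_mult_iff)
  define p where "p = sqrt (d A)"
  define q where "q = c / p"
  have p: "p * p = d A" and pq: "p * q = c"
    using dA by (auto simp: p_def q_def)
  define v where "v z = (if z = A then p else if z = B then q else 0)" for z
  define e where "e z = (if z = A then 0 else if z = B then d B - q * q else d z)" for z
  have "q * q \<le> d B"
    using det dA p pq by (simp add: q_def power2_eq_square field_simps)
  then have "\<forall>x\<in>basis n. e x \<ge> 0"
    using d_nonneg by (auto simp: e_def)
  moreover have "pair_mat A B d c z x = (if z = x then e x else 0) + v z * v x" for z x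
    using AB(3) p pq unfolding pair_mat_def e_def v_def
    by (cases "z = A"; cases "z = B"; cases "x = A"; cases "x = B") (auto simp: mult.commute)
  then have "\<forall>z\<in>basis n. \<forall>x\<in>basis n.
      M z x = complex_of_real (if z = x then e x else 0) + complex_of_real (v z) * complex_of_real (v x)"
    using M_eq by (simp add: meq_def)
  moreover have "(\<Sum>x\<in>basis n. (cmod (complex_of_real (v x)))\<^sup>2) = p * p + q * q"
    using sum_two[of "basis n" A B "\<lambda>x. (cmod (complex_of_real (v x)))\<^sup>2"] AB
    by (simp add: v_def power2_eq_square)
  moreover have "(\<Sum>x\<in>basis n. e x) = 1 - p * p - q * q"
  proof -
    have "(\<Sum>x\<in>basis n. e x)
        = (\<Sum>x\<in>basis n. d x - ((if x = A then d A else 0) + (if x = B then q * q else 0)))"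
      using AB(3) by (intro sum.cong refl) (auto simp: e_def)
    then show ?thesis
      using AB d_sum p by (simp add: sum_subtractf sum.distrib)
  qed
  ultimately show ?thesis
    using that[of e "\<lambda>x. complex_of_real (v x)"] by simp
qed

lemma cmod_trace_le_1:
  assumes "c\<^sup>2 \<le> d A * d B" "unitary n U"
  shows "cmod (mtrace n (mmult n U M)) \<le> 1"
proof -
  obtain e u where "\<forall>x\<in>basis n. e x \<ge> 0"
    and "\<forall>z\<in>basis n. \<forall>x\<in>basis n. M z x = complex_of_real (if z = x then e x else 0) + u z * u x"
    and "(\<Sum>x\<in>basis n. e x) + (\<Sum>x\<in>basis n. (cmod (u x))\<^sup>2) = 1"
    using diag_plus_rank_one_decomposition[OF assms(1)] by blast
  then show ?thesis
    using cmod_trace_diag_plus_rank_one_le[OF assms(2)] by metis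
qed

lemma pair_mat_form:
  assumes "\<forall>x. x \<noteq> A \<and> x \<noteq> B \<longrightarrow> v x = 0"
  shows "(\<Sum>x\<in>basis n. \<Sum>z\<in>basis n. v x * v z * pair_mat A B d c z x)
           = d A * (v A)\<^sup>2 + 2 * c * v A * v B + d B * (v B)\<^sup>2"
proof -
  have "(\<Sum>z\<in>basis n. v x * v z * pair_mat A B d c z x)
      = v x * v A * pair_mat A B d c A x + v x * v B * pair_mat A B d c B x" for x
    by (rule sum_two) (use AB assms in auto)
  then have "(\<Sum>x\<in>basis n. \<Sum>z\<in>basis n. v x * v z * pair_mat A B d c z x)
      = (\<Sum>x\<in>basis n. v x * v A * pair_mat A B d c A x + v x * v B * pair_mat A B d c B x)"
    by simp
  also have "\<dots> = (v A * v A * pair_mat A B d c A A + v A * v B * pair_mat A B d c B A)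
                  + (v B * v A * pair_mat A B d c A B + v B * v B * pair_mat A B d c B B)"
    by (rule sum_two) (use AB assms in auto)
  finally show ?thesis
    using AB(3) by (simp add: pair_mat_def power2_eq_square algebra_simps)
qed

text \<open>If \<open>c\<^sup>2 > d A d B\<close>, the form \<open>w\<^sup>T M w\<close> is negative for some \<open>w\<close> supported on
  \<open>{A, B}\<close>, and the reflection in \<open>w\<^sup>\<perp>\<close> achieves a trace larger than one.\<close>

lemma exists_trace_gt_1:
  assumes det: "d A * d B < c\<^sup>2"
  shows "\<exists>U. unitary n U \<and> cmod (mtrace n (mmult n U M)) > 1"
proof -
  obtain s t where form: "d A * s\<^sup>2 + 2 * c * s * t + d B * t\<^sup>2 < 0"
    using negative_binary_form[of "d A" "d B" c] d_nonneg AB c_pos det by auto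
  define v where "v z = (if z = A then s else if z = B then t else 0)" for z
  define N where "N = s\<^sup>2 + t\<^sup>2"
  define k where "k = 2 / N"
  define R where "R x y = (if x = y then 1 else 0) - k * v x * v y" for x y
  have v_AB: "v A = s" "v B = t" "\<forall>x. x \<noteq> A \<and> x \<noteq> B \<longrightarrow> v x = 0"
    using AB(3) by (auto simp: v_def)
  have "(\<Sum>z\<in>basis n. v z * v z) = v A * v A + v B * v B"
    by (rule sum_two) (use AB v_AB in auto)
  then have norm_v: "(\<Sum>z\<in>basis n. v z * v z) = N"
    unfolding N_def v_AB by (simp add: power2_eq_square)
  have "N > 0"
    using form unfolding N_def by (cases "s = 0"; cases "t = 0") (auto simp: add_pos_nonneg add_nonneg_pos)
  then have unit: "unitary n (\<lambda>x y. complex_of_real (R x y))"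
    using unitary_householder[OF norm_v] unfolding R_def k_def by simp
  have "(\<Sum>x\<in>basis n. \<Sum>z\<in>basis n. R x z * pair_mat A B d c z x)
      = (\<Sum>x\<in>basis n. pair_mat A B d c x x) - k * (\<Sum>x\<in>basis n. \<Sum>z\<in>basis n. v x * v z * pair_mat A B d c z x)"
    unfolding R_def by (rule sum_householder_trace)
  also have "\<dots> = 1 - k * (d A * s\<^sup>2 + 2 * c * s * t + d B * t\<^sup>2)"
    unfolding sum_pair_mat_diag pair_mat_form[OF v_AB(3)] v_AB ..
  finally have tr: "mtrace n (mmult n (\<lambda>x y. complex_of_real (R x y)) M)
      = complex_of_real (1 - k * (d A * s\<^sup>2 + 2 * c * s * t + d B * t\<^sup>2))"
    unfolding trace_M by (simp flip: of_real_sum of_real_mult)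
  have "k * (d A * s\<^sup>2 + 2 * c * s * t + d B * t\<^sup>2) < 0"
    using \<open>N > 0\<close> form unfolding k_def by (intro mult_pos_neg) simp_all
  then have "cmod (mtrace n (mmult n (\<lambda>x y. complex_of_real (R x y)) M)) > 1"
    unfolding tr norm_of_real by linarith
  then show ?thesis
    using unit by blast
qed

lemma trace_norm_eq_1_iff: "trace_norm n M = 1 \<longleftrightarrow> c\<^sup>2 \<le> d A * d B"
proof
  assume tn: "trace_norm n M = 1"
  show "c\<^sup>2 \<le> d A * d B"
  proof (rule ccontr)
    assume "\<not> c\<^sup>2 \<le> d A * d B"
    then obtain U where "unitary n U" "cmod (mtrace n (mmult n U M)) > 1"
      using exists_trace_gt_1 by force
    then show False
      using trace_norm_ge[of n U M] tn by simp
  qed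
next
  assume "c\<^sup>2 \<le> d A * d B"
  then have "trace_norm n M \<le> 1"
    using cmod_trace_le_1 by (intro trace_norm_le)
  then show "trace_norm n M = 1"
    using trace_norm_ge_1 by simp
qed

end

lemma ptrans_damp_psi_pair_matrix:
  assumes n1: "n \<ge> 1" and g: "\<forall>i<n. 0 \<le> g i \<and> g i \<le> 1" and ab: "a\<^sup>2 + b\<^sup>2 = 1"
    and c: "a * b * branch_amp n g {..<n} > 0"
    and A: "A \<subseteq> {..<n}" "A \<noteq> {}" "A \<noteq> {..<n}"
  shows "pair_matrix n A ({..<n} - A) (\<lambda>x. damped_ghz n a b g x x) (a * b * branch_amp n g {..<n})
           (ptrans A (damp n g (proj (psi n a b))))"
proof
  let ?B = "{..<n} - A"
  show AB: "A \<in> basis n" "?B \<in> basis n" "A \<noteq> ?B"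
    using A by (auto simp: basis_def)
  show "\<forall>x\<in>basis n. 0 \<le> damped_ghz n a b g x x"
    using branch_prob_nonneg[OF g] by (simp add: damped_ghz_diag[OF n1])
  show "(\<Sum>x\<in>basis n. damped_ghz n a b g x x) = 1"
    by (rule sum_damped_ghz_diag[OF n1 ab])
  show "0 < a * b * branch_amp n g {..<n}"
    by (rule c)
  show "meq n (ptrans A (damp n g (proj (psi n a b))))
      (\<lambda>x y. complex_of_real (pair_mat A ?B (\<lambda>x. damped_ghz n a b g x x) (a * b * branch_amp n g {..<n}) x y))"
    unfolding meq_def
  proof (intro ballI)
    fix x y
    assume x: "x \<in> basis n" and y: "y \<in> basis n"
    define x' where "x' = (x - A) \<union> (y \<inter> A)"
    define y' where "y' = (y - A) \<union> (x \<inter> A)"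
    have "x' \<in> basis n" "y' \<in> basis n"
      using x y A by (auto simp: basis_def x'_def y'_def)
    then have "ptrans A (damp n g (proj (psi n a b))) x y = complex_of_real (damped_ghz n a b g x' y')"
      unfolding ptrans_def x'_def[symmetric] y'_def[symmetric] by (rule damp_psi_entry[OF n1 g])
    moreover have "x' = y' \<longleftrightarrow> x = y" "x = y \<Longrightarrow> x' = x"
      unfolding x'_def y'_def by blast+
    moreover have "(x' = {} \<and> y' = {..<n}) \<longleftrightarrow> (x = A \<and> y = ?B)"
      "(x' = {..<n} \<and> y' = {}) \<longleftrightarrow> (x = ?B \<and> y = A)"
      using x y A unfolding x'_def y'_def basis_def by blast+
    ultimately show "ptrans A (damp n g (proj (psi n a b))) x y
        = complex_of_real (pair_mat A ?B (\<lambda>x. damped_ghz n a b g x x) (a * b * branch_amp n g {..<n}) x y)"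
      using AB(3) by (cases "x = y") (auto simp: damped_ghz_def pair_mat_def)
  qed
qed

lemma damped_ghz_cut_det:
  assumes n1: "n \<ge> 1" and g: "\<forall>i<n. 0 \<le> g i \<and> g i \<le> 1"
    and A: "A \<subseteq> {..<n}" "A \<noteq> {}" "A \<noteq> {..<n}"
  shows "damped_ghz n a b g A A * damped_ghz n a b g ({..<n} - A) ({..<n} - A) - (a * b * branch_amp n g {..<n})\<^sup>2
           = b\<^sup>2 * (\<Prod>i<n. 1 - g i) * (b\<^sup>2 * (\<Prod>i<n. g i) - a\<^sup>2)"
proof -
  have "{..<n} - A \<noteq> {}"
    using A by auto
  then have diag: "damped_ghz n a b g A A * damped_ghz n a b g ({..<n} - A) ({..<n} - A)
      = b\<^sup>2 * b\<^sup>2 * ((\<Prod>i<n. g i) * (\<Prod>i<n. 1 - g i))"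
    using A(2) branch_prob_complement[OF A(1), of g] by (simp add: damped_ghz_diag[OF n1] algebra_simps)
  have "(\<Prod>i<n. 1 - g i) \<ge> 0"
    using g by (intro prod_nonneg) auto
  then have coh: "(a * b * branch_amp n g {..<n})\<^sup>2 = a\<^sup>2 * b\<^sup>2 * (\<Prod>i<n. 1 - g i)"
    by (simp add: branch_amp_full power_mult_distrib)
  show ?thesis
    unfolding diag coh by (simp add: algebra_simps)
qed

lemma ptrans_damp_psi_cut:
  assumes n1: "n \<ge> 1" and g: "\<forall>i<n. 0 \<le> g i \<and> g i < 1" and ab: "a > 0" "b > 0" "a\<^sup>2 + b\<^sup>2 = 1"
    and A: "A \<subseteq> {..<n}" "A \<noteq> {}" "A \<noteq> {..<n}"
  defines "\<rho> \<equiv> damp n g (proj (psi n a b))" and "P \<equiv> \<Prod>i<n. g i" and "Q \<equiv> \<Prod>i<n. 1 - g i"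
  shows "(let M = ptrans A \<rho>; x = A; y = {..<n} - A in
            M x x * M y y - M x y * M y x = complex_of_real (b\<^sup>2 * Q * (b\<^sup>2 * P - a\<^sup>2)))"
    and "negativity n A \<rho> = 0 \<longleftrightarrow> (a / b)\<^sup>2 \<le> P"
proof -
  let ?B = "{..<n} - A" and ?d = "\<lambda>x. damped_ghz n a b g x x" and ?c = "a * b * branch_amp n g {..<n}"
  have g': "\<forall>i<n. 0 \<le> g i \<and> g i \<le> 1"
    using g by auto
  have Q_pos: "Q > 0"
    unfolding Q_def using g by (intro prod_pos) auto
  then have "?c > 0"
    using ab by (simp add: branch_amp_full Q_def)
  then interpret pair_matrix n A ?B ?d ?c "ptrans A \<rho>"
    unfolding \<rho>_def by (rule ptrans_damp_psi_pair_matrix[OF n1 g' ab(3) _ A])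
  have det: "?d A * ?d ?B - ?c\<^sup>2 = b\<^sup>2 * Q * (b\<^sup>2 * P - a\<^sup>2)"
    unfolding P_def Q_def by (rule damped_ghz_cut_det[OF n1 g' A])
  have "ptrans A \<rho> A A = complex_of_real (?d A)" "ptrans A \<rho> ?B ?B = complex_of_real (?d ?B)"
    "ptrans A \<rho> A ?B = complex_of_real ?c" "ptrans A \<rho> ?B A = complex_of_real ?c"
    using M_eq AB by (simp_all add: meq_def pair_mat_def)
  then show "(let M = ptrans A \<rho>; x = A; y = ?B in
            M x x * M y y - M x y * M y x = complex_of_real (b\<^sup>2 * Q * (b\<^sup>2 * P - a\<^sup>2)))"
    unfolding Let_def det[symmetric] by (simp add: power2_eq_square)
  have "b\<^sup>2 * Q > 0"
    using ab(2) Q_pos by simp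
  have "negativity n A \<rho> = 0 \<longleftrightarrow> ?c\<^sup>2 \<le> ?d A * ?d ?B"
    by (simp add: negativity_def trace_norm_eq_1_iff)
  also have "\<dots> \<longleftrightarrow> 0 \<le> b\<^sup>2 * Q * (b\<^sup>2 * P - a\<^sup>2)"
    using det by linarith
  also have "\<dots> \<longleftrightarrow> a\<^sup>2 \<le> b\<^sup>2 * P"
    using \<open>b\<^sup>2 * Q > 0\<close> mult_le_cancel_left_pos[of "b\<^sup>2 * Q" 0 "b\<^sup>2 * P - a\<^sup>2"] by simp
  also have "\<dots> \<longleftrightarrow> (a / b)\<^sup>2 \<le> P"
    using ab(2) by (simp add: power_divide divide_le_eq mult.commute)
  finally show "negativity n A \<rho> = 0 \<longleftrightarrow> (a / b)\<^sup>2 \<le> P" .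
qed

section \<open>Death and rebirth surfaces\<close>

lemma rebirth_facet_iff:
  fixes a b Q :: real
  assumes "a > 0" "b > 0" "Q > 0"
  shows "b\<^sup>2 * Q = a * b * sqrt Q \<longleftrightarrow> Q = (a / b)\<^sup>2"
proof -
  have "b\<^sup>2 * Q = a * b * sqrt Q \<longleftrightarrow> (b * sqrt Q) * (b * sqrt Q) = a * (b * sqrt Q)"
    using assms(3) by (simp add: power2_eq_square algebra_simps)
  also have "\<dots> \<longleftrightarrow> b * sqrt Q = a"
    using assms by (simp add: mult_cancel_right)
  also have "\<dots> \<longleftrightarrow> sqrt Q = a / b"
    using assms(2) by (auto simp: field_simps)
  also have "\<dots> \<longleftrightarrow> Q = (a / b)\<^sup>2"
  proof
    assume "sqrt Q = a / b"
    then show "Q = (a / b)\<^sup>2"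
      using assms(3) real_sqrt_pow2[of Q] by simp
  next
    assume "Q = (a / b)\<^sup>2"
    then show "sqrt Q = a / b"
      using assms by simp
  qed
  finally show ?thesis .
qed

lemma coherence_le_ground_on_facet:
  fixes a b P Q :: real
  assumes "a > 0" "b > 0" "P \<ge> 0" "Q = (a / b)\<^sup>2"
  shows "a * b * sqrt Q \<le> a\<^sup>2 + b\<^sup>2 * P"
proof -
  have "sqrt Q = a / b"
    using assms by simp
  then have "a * b * sqrt Q = a\<^sup>2"
    using assms(2) by (simp add: power2_eq_square)
  then show ?thesis
    using assms(3) by simp
qed

lemma image_one_minus_Collect:
  "(\<lambda>g i. 1 - g i) ` {g. F g} = {g :: 'a \<Rightarrow> 'b::ring_1. F (\<lambda>i. 1 - g i)}"
proof
  show "(\<lambda>g i. 1 - g i) ` {g. F g} \<subseteq> {g. F (\<lambda>i. 1 - g i)}"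
    by (auto simp: comp_def)
  show "{g. F (\<lambda>i. 1 - g i)} \<subseteq> (\<lambda>g i. 1 - g i) ` {g. F g}"
    by (auto intro!: image_eqI[where x = "\<lambda>i. 1 - _ i"])
qed

lemma powr_two_div_eq_root_sq:
  fixes r :: real
  assumes "r > 0" "n > 0"
  shows "r powr (2 / real n) = root n (r\<^sup>2)"
proof -
  have "root n (r\<^sup>2) = (r powr 2) powr (1 / real n)"
    using assms by (simp add: root_powr_inverse)
  then show ?thesis
    by (simp add: powr_powr)
qed

theorem propositionS8:
  fixes n :: nat and \<alpha> \<beta> :: real and \<gamma> :: "nat \<Rightarrow> real"
  assumes n2: "n \<ge> 2"
    and ab_pos: "\<alpha> > 0" "\<beta> > 0"
    and norm: "\<alpha>\<^sup>2 + \<beta>\<^sup>2 = 1"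
    and r_lt1: "\<alpha> / \<beta> < 1"
    and gam: "\<forall>i<n. 0 \<le> \<gamma> i \<and> \<gamma> i < 1"
  defines "\<rho> \<equiv> damp n \<gamma> (proj (psi n \<alpha> \<beta>))"
    and "r \<equiv> \<alpha> / \<beta>"
    and "P \<equiv> (\<Prod>i<n. \<gamma> i)"
    and "Q \<equiv> (\<Prod>i<n. 1 - \<gamma> i)"
  shows
    "\<rho> {} {} = complex_of_real (\<alpha>\<^sup>2 + \<beta>\<^sup>2 * P)
     \<and> \<rho> {..<n} {..<n} = complex_of_real (\<beta>\<^sup>2 * Q)
     \<and> \<rho> {} {..<n} = complex_of_real (\<alpha> * \<beta> * sqrt Q)
     \<and> (\<rho> \<in> stab_poly n \<longleftrightarrow>
          Re (\<rho> {} {}) \<ge> Re (\<rho> {} {..<n}) \<and> Re (\<rho> {..<n} {..<n}) \<ge> Re (\<rho> {} {..<n}))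
     \<and> (Re (\<rho> {..<n} {..<n}) = Re (\<rho> {} {..<n}) \<longleftrightarrow> Q = r\<^sup>2)
     \<and> (Q = r\<^sup>2 \<longrightarrow> Re (\<rho> {} {}) \<ge> Re (\<rho> {} {..<n}))
     \<and> (\<forall>A. A \<subseteq> {..<n} \<and> A \<noteq> {} \<and> A \<noteq> {..<n} \<longrightarrow>
          (let M = ptrans A \<rho>; a = A; b = {..<n} - A in
             M a a * M b b - M a b * M b a
               = complex_of_real (\<beta>\<^sup>2 * Q * (\<beta>\<^sup>2 * P - \<alpha>\<^sup>2)))
          \<and> (negativity n A \<rho> = 0 \<longleftrightarrow> P \<ge> r\<^sup>2))
     \<and> (\<lambda>g i. 1 - g i) ` {g :: nat \<Rightarrow> real. (\<Prod>i<n. g i) = r\<^sup>2}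
          = {g. (\<Prod>i<n. 1 - g i) = r\<^sup>2}
     \<and> (\<lambda>g i. 1 - g i) ` {g :: nat \<Rightarrow> real. (\<Prod>i<n. 1 - g i) = r\<^sup>2}
          = {g. (\<Prod>i<n. g i) = r\<^sup>2}
     \<and> (P = r\<^sup>2 \<longleftrightarrow> root n P = r powr (2 / real n))
     \<and> (Q = r\<^sup>2 \<longleftrightarrow> 1 - root n Q = 1 - r powr (2 / real n))
     \<and> r powr (2 / real n) + (1 - r powr (2 / real n)) = 1"
proof -
  have n1: "n \<ge> 1" and g: "\<forall>i<n. 0 \<le> \<gamma> i \<and> \<gamma> i \<le> 1"
    using n2 gam by auto
  have Q_pos: "Q > 0" and P_nonneg: "P \<ge> 0"
    unfolding P_def Q_def using gam by (auto intro: prod_pos prod_nonneg)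
  note corners = damp_psi_corners[OF n1 g, of \<alpha> \<beta>, folded \<rho>_def P_def Q_def]
  have stab: "\<rho> \<in> stab_poly n \<longleftrightarrow>
      Re (\<rho> {} {..<n}) \<le> Re (\<rho> {} {}) \<and> Re (\<rho> {} {..<n}) \<le> Re (\<rho> {..<n} {..<n})"
    unfolding \<rho>_def using ab_pos by (intro damp_psi_in_stab_poly_iff[OF n1 g norm]) simp
  note cut = ptrans_damp_psi_cut[OF n1 gam ab_pos norm, folded \<rho>_def P_def Q_def r_def]
  have root_r: "r powr (2 / real n) = root n (r\<^sup>2)"
    using n1 ab_pos unfolding r_def by (intro powr_two_div_eq_root_sq) auto
  show ?thesis
    unfolding root_r
    using stab cut rebirth_facet_iff[OF ab_pos Q_pos] coherence_le_ground_on_facet[OF ab_pos P_nonneg]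
      n1 by (simp add: corners r_def image_one_minus_Collect real_root_eq_iff)
qed

end
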